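(* Let $M$ be a minimal dominating set of a finite tree $T$, let $X\subseteq N_2(M)$, and let $A_2=N(X)\cap a_2(M)$. Suppose that $A_2\cup X$ induces a connected subtree of $T$ and that $X$ is an independent set in $T$. Then Algorithm 2 (described below), applied to $T$, $M$ and $X$, terminates with a minimal dominating set $M'$ of $T$ satisfying $|M'|\ge |M|-|A_2|+|X|$. Algorithm 2: set $A=N(X)\cap a(M)$, $A_2=N(X)\cap a_2(M)$, $N=N(A)\cap N_1(M)$, and $M'=((M\cup X)\setminus A)\cup N$. Then for each $x\in X$ in turn: root $T$ at $x$; let $T_x$ be the subtree of $T$ obtained by removing the vertices of $A_2$ together with all their descendants (with respect to the root $x$); let $M'_x=M'\cap V(T_x)$; let $M''_x$ be the output of Algorithm 1 applied to $T_x$ rooted at $x$ and the set $M'_x$; replace $M'$ by $(M'\setminus M'_x)\cup M''_x$. Finally return $M'$. Algorithm 1 (input: a finite tree rooted at a vertex and a dominating set $M_0$ of it): set $i=0$; while $M_i$ is not a minimal dominating set: choose a supported vertex $u_i\in M_i\setminus a(M_i)$ of least depth; let $A_{i+1}$ be the set of vertices of $a_1(M_i)$ adjacent to $u_i$; let $N_{i+1}$ be the set of vertices of $N_1(M_i)$ adjacent to a vertex of $A_{i+1}$; set $M_{i+1}=(M_i\setminus A_{i+1})\cup N_{i+1}$ and increase $i$ by one. When the loop ends, return $M_i$.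
   Context: A dominating set of a graph $G=(V,E)$ is a set $S\subseteq V$ such that every vertex is in $S$ or adjacent to a vertex of $S$; it is minimal if no proper subset is dominating. $N(u)$ and $N[u]=N(u)\cup\{u\}$ are open/closed neighbourhoods; $N(X)=\bigcup_{x\in X}N(x)$. For a dominating set $S$ (of the relevant tree): $a(S)=\{u\in S: S\setminus\{u\}\text{ is not dominating}\}$ (critical vertices); vertices of $S\setminus a(S)$ are supported; $N_1(S)=\{u\in V\setminus S: |N[u]\cap S|=1\}$; $N_2(S)=\{u\in V\setminus S: |N[u]\cap S|\ge 2\}$; $a_1(S)=\{u\in a(S): N[u]\cap N_1(S)\ne\emptyset\}$; $a_2(S)=\{u\in a(S): N[u]\cap N_1(S)=\emptyset\}$. In a rooted tree, depth is distance to the root and $y$ is a descendant of $z$ if $z$ lies on the path from $y$ to the root. *)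

theory Defs
  imports Main
begin

text \<open>Induced subgraphs are given by restricting the vertex set;
all notions below only look at E between vertices of the given vertex set.\<close>

definition nbr :: "'a set \<Rightarrow> ('a \<Rightarrow> 'a \<Rightarrow> bool) \<Rightarrow> 'a \<Rightarrow> 'a set" where
  "nbr V E u = {v \<in> V. E u v}"

definition cnbr :: "'a set \<Rightarrow> ('a \<Rightarrow> 'a \<Rightarrow> bool) \<Rightarrow> 'a \<Rightarrow> 'a set" where
  "cnbr V E u = insert u (nbr V E u)"

definition nbrs :: "'a set \<Rightarrow> ('a \<Rightarrow> 'a \<Rightarrow> bool) \<Rightarrow> 'a set \<Rightarrow> 'a set" where
  "nbrs V E X = (\<Union>x\<in>X. nbr V E x)"

definition walk :: "'a set \<Rightarrow> ('a \<Rightarrow> 'a \<Rightarrow> bool) \<Rightarrow> 'a list \<Rightarrow> bool" where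
  "walk V E xs \<longleftrightarrow> xs \<noteq> [] \<and> set xs \<subseteq> V \<and> successively E xs"

definition connected_graph :: "'a set \<Rightarrow> ('a \<Rightarrow> 'a \<Rightarrow> bool) \<Rightarrow> bool" where
  "connected_graph V E \<longleftrightarrow>
     (\<forall>u\<in>V. \<forall>v\<in>V. \<exists>xs. walk V E xs \<and> hd xs = u \<and> last xs = v)"

definition is_cycle :: "'a set \<Rightarrow> ('a \<Rightarrow> 'a \<Rightarrow> bool) \<Rightarrow> 'a list \<Rightarrow> bool" where
  "is_cycle V E xs \<longleftrightarrow> length xs \<ge> 3 \<and> distinct xs \<and> walk V E xs \<and> E (last xs) (hd xs)"

definition is_tree :: "'a set \<Rightarrow> ('a \<Rightarrow> 'a \<Rightarrow> bool) \<Rightarrow> bool" where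
  "is_tree V E \<longleftrightarrow> finite V \<and> V \<noteq> {}
     \<and> (\<forall>u\<in>V. \<forall>v\<in>V. E u v \<longleftrightarrow> E v u) \<and> (\<forall>u\<in>V. \<not> E u u)
     \<and> connected_graph V E \<and> \<not> (\<exists>xs. is_cycle V E xs)"

definition dominating :: "'a set \<Rightarrow> ('a \<Rightarrow> 'a \<Rightarrow> bool) \<Rightarrow> 'a set \<Rightarrow> bool" where
  "dominating V E S \<longleftrightarrow> S \<subseteq> V \<and> (\<forall>v\<in>V. v \<in> S \<or> (\<exists>s\<in>S. E v s))"

definition min_dominating :: "'a set \<Rightarrow> ('a \<Rightarrow> 'a \<Rightarrow> bool) \<Rightarrow> 'a set \<Rightarrow> bool" where
  "min_dominating V E S \<longleftrightarrow> dominating V E S \<and> (\<forall>S'. S' \<subset> S \<longrightarrow> \<not> dominating V E S')"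

text \<open>critical vertices a(S)\<close>
definition crit :: "'a set \<Rightarrow> ('a \<Rightarrow> 'a \<Rightarrow> bool) \<Rightarrow> 'a set \<Rightarrow> 'a set" where
  "crit V E S = {u \<in> S. \<not> dominating V E (S - {u})}"

definition N1 :: "'a set \<Rightarrow> ('a \<Rightarrow> 'a \<Rightarrow> bool) \<Rightarrow> 'a set \<Rightarrow> 'a set" where
  "N1 V E S = {u \<in> V - S. card (cnbr V E u \<inter> S) = 1}"

definition N2 :: "'a set \<Rightarrow> ('a \<Rightarrow> 'a \<Rightarrow> bool) \<Rightarrow> 'a set \<Rightarrow> 'a set" where
  "N2 V E S = {u \<in> V - S. card (cnbr V E u \<inter> S) \<ge> 2}"

definition a1 :: "'a set \<Rightarrow> ('a \<Rightarrow> 'a \<Rightarrow> bool) \<Rightarrow> 'a set \<Rightarrow> 'a set" where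
  "a1 V E S = {u \<in> crit V E S. cnbr V E u \<inter> N1 V E S \<noteq> {}}"

definition a2 :: "'a set \<Rightarrow> ('a \<Rightarrow> 'a \<Rightarrow> bool) \<Rightarrow> 'a set \<Rightarrow> 'a set" where
  "a2 V E S = {u \<in> crit V E S. cnbr V E u \<inter> N1 V E S = {}}"

definition depth :: "'a set \<Rightarrow> ('a \<Rightarrow> 'a \<Rightarrow> bool) \<Rightarrow> 'a \<Rightarrow> 'a \<Rightarrow> nat" where
  "depth V E r v = (LEAST n. \<exists>xs. walk V E xs \<and> hd xs = v \<and> last xs = r \<and> length xs = Suc n)"

definition descendant :: "'a set \<Rightarrow> ('a \<Rightarrow> 'a \<Rightarrow> bool) \<Rightarrow> 'a \<Rightarrow> 'a \<Rightarrow> 'a \<Rightarrow> bool" where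
  "descendant V E r y z \<longleftrightarrow>
     (\<exists>xs. walk V E xs \<and> distinct xs \<and> hd xs = y \<and> last xs = r \<and> z \<in> set xs)"

subsection \<open>Algorithm 1 (nondeterministic: any supported vertex of least depth may be chosen)\<close>

definition alg1_step :: "'a set \<Rightarrow> ('a \<Rightarrow> 'a \<Rightarrow> bool) \<Rightarrow> 'a \<Rightarrow> 'a set \<Rightarrow> 'a set \<Rightarrow> bool" where
  "alg1_step V E r M M' \<longleftrightarrow> \<not> min_dominating V E M \<and>
     (\<exists>u. u \<in> M - crit V E M \<and> (\<forall>w \<in> M - crit V E M. depth V E r u \<le> depth V E r w) \<and>
        (let A = {v \<in> a1 V E M. E u v};
             N = {w \<in> N1 V E M. \<exists>v\<in>A. E w v}
         in M' = (M - A) \<union> N))"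

inductive alg1_result :: "'a set \<Rightarrow> ('a \<Rightarrow> 'a \<Rightarrow> bool) \<Rightarrow> 'a \<Rightarrow> 'a set \<Rightarrow> 'a set \<Rightarrow> bool"
  for V E r where
  stop: "min_dominating V E M \<Longrightarrow> alg1_result V E r M M"
| step: "alg1_step V E r M M1 \<Longrightarrow> alg1_result V E r M1 Mf \<Longrightarrow> alg1_result V E r M Mf"

definition alg1_terminates :: "'a set \<Rightarrow> ('a \<Rightarrow> 'a \<Rightarrow> bool) \<Rightarrow> 'a \<Rightarrow> 'a set \<Rightarrow> bool" where
  "alg1_terminates V E r M \<longleftrightarrow>
     \<not> (\<exists>f. f 0 = M \<and> (\<forall>i. alg1_step V E r (f i) (f (Suc i))))"

definition sub_vertices :: "'a set \<Rightarrow> ('a \<Rightarrow> 'a \<Rightarrow> bool) \<Rightarrow> 'a set \<Rightarrow> 'a \<Rightarrow> 'a set" where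
  "sub_vertices V E A2 x = {y \<in> V. \<not> (\<exists>z\<in>A2. descendant V E x y z)}"

definition alg2_init :: "'a set \<Rightarrow> ('a \<Rightarrow> 'a \<Rightarrow> bool) \<Rightarrow> 'a set \<Rightarrow> 'a set \<Rightarrow> 'a set" where
  "alg2_init V E M X =
     (let A = nbrs V E X \<inter> crit V E M;
          N = nbrs V E A \<inter> N1 V E M
      in ((M \<union> X) - A) \<union> N)"

text \<open>The loop over X processed in the order of the list xs.\<close>
inductive alg2_loop :: "'a set \<Rightarrow> ('a \<Rightarrow> 'a \<Rightarrow> bool) \<Rightarrow> 'a set \<Rightarrow> 'a list \<Rightarrow> 'a set \<Rightarrow> 'a set \<Rightarrow> bool"
  for V E A2 where
  nil: "alg2_loop V E A2 [] M M"
| cons: "alg1_result (sub_vertices V E A2 x) E x (M \<inter> sub_vertices V E A2 x) Mx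
         \<Longrightarrow> alg2_loop V E A2 xs ((M - (M \<inter> sub_vertices V E A2 x)) \<union> Mx) Mf
         \<Longrightarrow> alg2_loop V E A2 (x # xs) M Mf"

fun alg2_loop_terminates :: "'a set \<Rightarrow> ('a \<Rightarrow> 'a \<Rightarrow> bool) \<Rightarrow> 'a set \<Rightarrow> 'a list \<Rightarrow> 'a set \<Rightarrow> bool" where
  "alg2_loop_terminates V E A2 [] M = True"
| "alg2_loop_terminates V E A2 (x # xs) M \<longleftrightarrow>
     alg1_terminates (sub_vertices V E A2 x) E x (M \<inter> sub_vertices V E A2 x) \<and>
     (\<forall>Mx. alg1_result (sub_vertices V E A2 x) E x (M \<inter> sub_vertices V E A2 x) Mx \<longrightarrow>
        alg2_loop_terminates V E A2 xs ((M - (M \<inter> sub_vertices V E A2 x)) \<union> Mx))"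

end

theory Submission
  imports Defs
begin

text \<open>
  Algorithm 1 on a tree rooted at \<open>r\<close> preserves an invariant of its current set \<open>S\<close>:
  \<open>S\<close> dominates, contains \<open>r\<close>, and no supported vertex of \<open>S\<close> is the root or has its
  parent in \<open>S\<close>. Then all \<open>S\<close>-neighbours of the chosen supported vertex \<open>u\<close> are critical
  children of \<open>u\<close>, each with a private neighbour among the grandchildren of \<open>u\<close>; a step
  trades these children for at least as many grandchildren, so the size does not drop
  and the sum of the depths strictly grows, which bounds the number of steps.

  For Algorithm 2, connectivity of \<open>A\<^sub>2 \<union> X\<close> and independence of \<open>X\<close> make the
  subtrees \<open>T\<^sub>x\<close> pairwise disjoint, with \<open>x\<close> the only vertex of \<open>T\<^sub>x\<close> adjacent to
  \<open>A\<^sub>2\<close>, and the initial set restricted to \<open>T\<^sub>x\<close> satisfies the invariant with root \<open>x\<close>.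
  So the loop runs Algorithm 1 on each \<open>T\<^sub>x\<close> independently; the result is minimal
  dominating on every \<open>T\<^sub>x\<close> and equals \<open>M - A\<^sub>2\<close> elsewhere, and these pieces glue to a
  minimal dominating set of the whole tree. The size bound holds already for the
  initial set, because every vertex of \<open>A - A\<^sub>2\<close> has its own private neighbour in \<open>N\<close>.
\<close>

lemma walk_Cons:
  "walk V E (x # xs) \<longleftrightarrow> x \<in> V \<and> (xs = [] \<or> E x (hd xs) \<and> walk V E xs)"
  by (cases xs) (auto simp: walk_def)

lemma walk_Cons_Cons: "walk V E (x # y # xs) \<longleftrightarrow> x \<in> V \<and> E x y \<and> walk V E (y # xs)"
  by (auto simp: walk_def)

lemma walk_not_Nil: "walk V E xs \<Longrightarrow> xs \<noteq> []"
  by (simp add: walk_def)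

lemma walk_set_subset: "walk V E xs \<Longrightarrow> set xs \<subseteq> V"
  by (simp add: walk_def)

lemma walk_append_iff:
  "xs \<noteq> [] \<Longrightarrow> ys \<noteq> [] \<Longrightarrow>
   walk V E (xs @ ys) \<longleftrightarrow> walk V E xs \<and> walk V E ys \<and> E (last xs) (hd ys)"
  by (auto simp: walk_def successively_append_iff)

lemma walk_suffix: "walk V E (xs @ y # ys) \<Longrightarrow> walk V E (y # ys)"
  by (cases "xs = []") (auto simp: walk_append_iff)

lemma walk_mono: "walk V E xs \<Longrightarrow> set xs \<subseteq> W \<Longrightarrow> walk W E xs"
  by (simp add: walk_def)

lemma walk_rev: "symp_on V E \<Longrightarrow> walk V E xs \<Longrightarrow> walk V E (rev xs)"
  unfolding walk_def by (auto intro: successively_mono dest: symp_onD)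

lemma walk_join:
  assumes "walk V E xs" "walk V E ys" "last xs = hd ys"
  shows "walk V E (xs @ tl ys) \<and> hd (xs @ tl ys) = hd xs \<and> last (xs @ tl ys) = last ys"
proof (cases "tl ys = []")
  case True
  then show ?thesis
    using assms walk_not_Nil[of V E ys] walk_not_Nil[of V E xs] by (cases ys) auto
next
  case False
  then have "walk V E (tl ys)" "E (hd ys) (hd (tl ys))"
    using assms(2) by (cases ys; simp add: walk_Cons)+
  then show ?thesis
    using assms False walk_not_Nil[of V E xs] by (simp add: walk_append_iff last_tl)
qed

lemma walk_shortcut:
  assumes "walk V E xs"
  obtains ys where "walk V E ys" "distinct ys" "hd ys = hd xs" "last ys = last xs"
    "set ys \<subseteq> set xs" "length ys \<le> length xs"
  using assms
proof (induction "length xs" arbitrary: xs rule: less_induct)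
  case less
  show ?case
  proof (cases "distinct xs")
    case True
    then show ?thesis using less.prems by blast
  next
    case False
    then obtain as y bs cs where xs: "xs = as @ [y] @ bs @ [y] @ cs"
      using not_distinct_decomp by blast
    have "walk V E (as @ [y])"
      using less.prems(2) walk_append_iff[of "as @ [y]" "bs @ y # cs" V E] by (simp add: xs)
    moreover have "walk V E (y # cs)"
      using less.prems(2) walk_suffix[of V E "as @ y # bs" y cs] by (simp add: xs)
    ultimately have "walk V E (as @ y # cs)"
      using walk_join[of V E "as @ [y]" "y # cs"] by simp
    moreover have "length (as @ y # cs) < length xs"
      by (simp add: xs)
    moreover have "hd (as @ y # cs) = hd xs" "last (as @ y # cs) = last xs"
      "set (as @ y # cs) \<subseteq> set xs"
      by (auto simp: xs hd_append)
    ultimately show ?thesis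
      using less.hyps[of "as @ y # cs"] less.prems(1) by (metis dual_order.trans less_imp_le)
  qed
qed

lemma diverging_paths_cycle:
  assumes sym: "symp_on V E"
    and xs: "walk V E (a # xs)" "distinct (a # xs)" "xs \<noteq> []"
    and ys: "walk V E (a # ys)" "distinct (a # ys)" "ys \<noteq> []"
    and same_end: "last xs = last ys" and diverge: "hd xs \<noteq> hd ys"
  shows "\<exists>cs. is_cycle V E cs"
proof -
  have "\<exists>y\<in>set ys. y \<in> set xs"
    using same_end xs(3) ys(3) by (metis last_in_set)
  then obtain ps q qs where ys_split: "ys = ps @ q # qs" and q: "q \<in> set xs"
    and ps: "\<forall>y\<in>set ps. y \<notin> set xs"
    by (auto elim!: split_list_first_propE)
  obtain us vs where xs_split: "xs = us @ q # vs"
    using q split_list by metis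
  define cs where "cs = (a # us) @ rev (ps @ [q])"
  have "walk V E ((a # us) @ [q])"
    using xs(1) walk_append_iff[of "(a # us) @ [q]" vs] by (cases vs) (simp_all add: xs_split)
  then have "walk V E (a # us)" "E (last (a # us)) q"
    using walk_append_iff[of "a # us" "[q]"] by simp_all
  moreover have "walk V E (ps @ [q])"
  proof -
    have "walk V E ys"
      using ys(1,3) by (simp add: walk_Cons)
    then show ?thesis
      using walk_append_iff[of "ps @ [q]" qs V E] by (cases "qs = []") (simp_all add: ys_split)
  qed
  ultimately have "walk V E cs"
    unfolding cs_def using walk_rev[OF sym, of "ps @ [q]"] walk_append_iff[of "a # us" "rev (ps @ [q])" V E]
    by simp
  moreover have "last cs = hd ys"
    by (cases ps) (simp_all add: cs_def ys_split)
  moreover have "E (hd ys) a"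
    using ys walk_set_subset[OF ys(1)] sym
    by (cases ys) (auto simp: walk_Cons dest: symp_onD)
  moreover have "distinct cs"
    using xs(2) ys(2) ps by (auto simp: cs_def xs_split ys_split)
  moreover have "length cs \<ge> 3"
    using diverge by (cases us; cases ps) (auto simp: cs_def xs_split ys_split)
  ultimately have "is_cycle V E cs"
    by (simp add: is_cycle_def cs_def)
  then show ?thesis ..
qed

lemma acyclic_path_unique:
  assumes sym: "symp_on V E" and acyclic: "\<not> (\<exists>cs. is_cycle V E cs)"
  shows "walk V E xs \<Longrightarrow> distinct xs \<Longrightarrow> walk V E ys \<Longrightarrow> distinct ys \<Longrightarrow>
    hd xs = hd ys \<Longrightarrow> last xs = last ys \<Longrightarrow> xs = ys"
proof (induction xs arbitrary: ys)
  case Nil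
  then show ?case by (simp add: walk_def)
next
  case (Cons a xs)
  obtain ys' where ys: "ys = a # ys'"
    using Cons.prems by (cases ys) (auto simp: walk_def)
  show ?case
  proof (cases "xs = [] \<or> ys' = []")
    case True
    then show ?thesis
      using Cons.prems ys by (metis last_ConsL last_ConsR last_in_set distinct.simps(2))
  next
    case False
    then have "walk V E xs" "walk V E ys'" "last xs = last ys'"
      using Cons.prems ys by (simp_all add: walk_Cons)
    moreover have "hd xs = hd ys'"
      using diverging_paths_cycle[OF sym Cons.prems(1,2) _ Cons.prems(3,4)[unfolded ys]]
        False Cons.prems(6) ys acyclic by auto
    ultimately show ?thesis
      using Cons.IH[of ys'] Cons.prems ys by simp
  qed
qed

lemma tree_symp: "is_tree V E \<Longrightarrow> symp_on V E"
  by (simp add: is_tree_def symp_on_def)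

lemma tree_path_exists:
  assumes "is_tree V E" "u \<in> V" "v \<in> V"
  obtains xs where "walk V E xs" "distinct xs" "hd xs = u" "last xs = v"
proof -
  have "connected_graph V E"
    using assms(1) by (simp add: is_tree_def)
  then obtain xs where "walk V E xs" "hd xs = u" "last xs = v"
    using assms(2,3) by (auto simp: connected_graph_def)
  then show ?thesis
    using that walk_shortcut by metis
qed

lemma tree_path_unique:
  "is_tree V E \<Longrightarrow> walk V E xs \<Longrightarrow> distinct xs \<Longrightarrow> walk V E ys \<Longrightarrow> distinct ys \<Longrightarrow>
    hd xs = hd ys \<Longrightarrow> last xs = last ys \<Longrightarrow> xs = ys"
  using acyclic_path_unique[OF tree_symp] by (auto simp: is_tree_def)

locale rooted_tree =
  fixes W :: "'a set" and E :: "'a \<Rightarrow> 'a \<Rightarrow> bool" and r :: 'a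
  assumes tree: "is_tree W E" and root_in: "r \<in> W"
begin

abbreviation D :: "'a \<Rightarrow> nat" where "D \<equiv> depth W E r"

lemma finite_W: "finite W"
  using tree by (simp add: is_tree_def)

lemma sym: "u \<in> W \<Longrightarrow> v \<in> W \<Longrightarrow> E u v \<Longrightarrow> E v u"
  using tree by (simp add: is_tree_def)

lemma no_loop: "u \<in> W \<Longrightarrow> \<not> E u u"
  using tree by (simp add: is_tree_def)

lemma depth_less_length:
  assumes "walk W E xs" "hd xs = v" "last xs = r"
  shows "D v < length xs"
proof -
  have "length xs = Suc (length xs - 1)"
    using walk_not_Nil[OF assms(1)] by simp
  then have "D v \<le> length xs - 1"
    unfolding depth_def using assms by (intro Least_le) metis
  then show ?thesis
    using walk_not_Nil[OF assms(1)] by (cases xs) auto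
qed

lemma shortest_root_path:
  assumes "v \<in> W"
  obtains xs where "walk W E xs" "distinct xs" "hd xs = v" "last xs = r"
    "length xs = Suc (D v)"
proof -
  obtain ys where ys: "walk W E ys" "hd ys = v" "last ys = r"
    using tree_path_exists[OF tree assms root_in] by metis
  then have "\<exists>n xs. walk W E xs \<and> hd xs = v \<and> last xs = r \<and> length xs = Suc n"
    using walk_not_Nil[OF ys(1)] by (metis Suc_pred length_greater_0_conv)
  then have "\<exists>xs. walk W E xs \<and> hd xs = v \<and> last xs = r \<and> length xs = Suc (D v)"
    unfolding depth_def by (rule LeastI_ex)
  then obtain xs where xs: "walk W E xs" "hd xs = v" "last xs = r" "length xs = Suc (D v)"
    by blast
  then obtain zs where "walk W E zs" "distinct zs" "hd zs = v" "last zs = r"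
    "length zs \<le> length xs"
    using walk_shortcut by metis
  moreover from this have "D v < length zs"
    using depth_less_length by blast
  ultimately show ?thesis
    using that xs(4) by simp
qed

lemma root_path_length:
  assumes "walk W E xs" "distinct xs" "last xs = r"
  shows "length xs = Suc (D (hd xs))"
proof -
  have "hd xs \<in> W"
    using assms(1) walk_set_subset walk_not_Nil by (metis hd_in_set subsetD)
  then obtain ys where "walk W E ys" "distinct ys" "hd ys = hd xs" "last ys = r"
    "length ys = Suc (D (hd xs))"
    using shortest_root_path by metis
  then show ?thesis
    using tree_path_unique[OF tree assms(1,2)] assms(3) by metis
qed

lemma root_path_depth_suffix:
  assumes "walk W E (as @ v # bs)" "distinct (as @ v # bs)" "last (as @ v # bs) = r"
  shows "D v = length bs"
  using root_path_length[of "v # bs"] walk_suffix[OF assms(1)] assms(2,3) by simp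

lemma depth_root: "D r = 0"
  using depth_less_length[of "[r]" r] root_in by (simp add: walk_def)

lemma depth_eq_0_iff:
  assumes "v \<in> W"
  shows "D v = 0 \<longleftrightarrow> v = r"
proof
  assume "D v = 0"
  moreover obtain xs where "hd xs = v" "last xs = r" "length xs = Suc (D v)"
    using shortest_root_path[OF assms] by metis
  ultimately show "v = r"
    by (cases xs) auto
qed (simp add: depth_root)

lemma parent_path:
  assumes v: "v \<in> W" and p: "p \<in> W" "E v p" "D p < D v"
  obtains xs where "walk W E (v # xs)" "distinct (v # xs)" "xs \<noteq> []" "last xs = r" "hd xs = p"
proof -
  obtain xs where xs: "walk W E xs" "distinct xs" "hd xs = p" "last xs = r"
    "length xs = Suc (D p)"
    using shortest_root_path[OF p(1)] by metis
  have "v \<notin> set xs"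
  proof
    assume "v \<in> set xs"
    then obtain as bs where "xs = as @ v # bs"
      by (metis split_list)
    then have "D v < length xs"
      using root_path_depth_suffix xs by simp
    then show False
      using xs(5) p(3) by simp
  qed
  then have "walk W E (v # xs)" "distinct (v # xs)"
    using xs v p walk_not_Nil[OF xs(1)] by (simp_all add: walk_Cons)
  then show ?thesis
    using that xs(3,4) walk_not_Nil[OF xs(1)] by simp
qed

lemma depth_adjacent:
  assumes y: "y \<in> W" and z: "z \<in> W" and yz: "E y z"
  shows "D y = Suc (D z) \<or> D z = Suc (D y)"
proof -
  obtain xs where xs: "walk W E xs" "distinct xs" "hd xs = z" "last xs = r"
    "length xs = Suc (D z)"
    using shortest_root_path[OF z] by metis
  show ?thesis
  proof (cases "y \<in> set xs")
    case True
    then obtain as bs where split: "xs = as @ y # bs"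
      by (metis split_list)
    have "as \<noteq> []"
      using split xs(3) no_loop[OF y] yz by auto
    then have "D y < D z"
      using root_path_depth_suffix[of as y bs] xs split by (cases as) auto
    moreover obtain ys where "walk W E ys" "hd ys = y" "last ys = r" "length ys = Suc (D y)"
      using shortest_root_path[OF y] by metis
    then have "D z < Suc (Suc (D y))"
      using depth_less_length[of "z # ys" z] z sym[OF y z yz] walk_not_Nil[of W E ys]
      by (simp add: walk_Cons)
    ultimately show ?thesis
      by simp
  next
    case False
    then have "length (y # xs) = Suc (D y)"
      using root_path_length[of "y # xs"] xs y yz walk_not_Nil[OF xs(1)]
      by (simp add: walk_Cons)
    then show ?thesis
      using xs(5) by simp
  qed
qed

lemma parent_unique:
  assumes "v \<in> W" "p \<in> W" "E v p" "D p < D v" "p' \<in> W" "E v p'" "D p' < D v"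
  shows "p = p'"
proof -
  obtain xs where "walk W E (v # xs)" "distinct (v # xs)" "xs \<noteq> []" "last xs = r" "hd xs = p"
    using parent_path assms(1-4) by metis
  moreover obtain xs' where "walk W E (v # xs')" "distinct (v # xs')" "xs' \<noteq> []" "last xs' = r"
    "hd xs' = p'"
    using parent_path assms(1,5-7) by metis
  ultimately have "v # xs = v # xs'"
    using tree_path_unique[OF tree, of "v # xs" "v # xs'"] by simp
  then show ?thesis
    using \<open>hd xs = p\<close> \<open>hd xs' = p'\<close> by simp
qed

lemma depth_root_nbr: "v \<in> W \<Longrightarrow> E v r \<Longrightarrow> D v = 1"
  using depth_adjacent[OF _ root_in] depth_root by auto

end

lemma dominating_subset: "dominating W E S \<Longrightarrow> S \<subseteq> W"
  by (simp add: dominating_def)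

lemma min_dominating_iff:
  "min_dominating W E S \<longleftrightarrow> dominating W E S \<and> (\<forall>u\<in>S. \<not> dominating W E (S - {u}))"
proof
  assume "min_dominating W E S"
  then show "dominating W E S \<and> (\<forall>u\<in>S. \<not> dominating W E (S - {u}))"
    unfolding min_dominating_def by blast
next
  assume *: "dominating W E S \<and> (\<forall>u\<in>S. \<not> dominating W E (S - {u}))"
  have "\<not> dominating W E S'" if "S' \<subset> S" for S'
  proof
    assume "dominating W E S'"
    moreover obtain u where "u \<in> S" "S' \<subseteq> S - {u}"
      using \<open>S' \<subset> S\<close> by blast
    ultimately have "dominating W E (S - {u})"
      using * unfolding dominating_def by blast
    then show False
      using * \<open>u \<in> S\<close> by blast
  qed
  then show "min_dominating W E S"
    using * by (simp add: min_dominating_def)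
qed

lemma min_dominating_crit: "min_dominating W E S \<Longrightarrow> crit W E S = S"
  unfolding min_dominating_iff crit_def by blast

lemma private_nbr:
  assumes "dominating W E S" "u \<in> crit W E S"
  obtains z where "z \<in> W" "z = u \<or> z \<notin> S \<and> E z u" "\<forall>s\<in>S - {u}. \<not> E z s"
proof -
  have "\<not> dominating W E (S - {u})" "S - {u} \<subseteq> W"
    using assms by (auto simp: crit_def dominating_def)
  then obtain z where z: "z \<in> W" "z \<notin> S - {u}" "\<forall>s\<in>S - {u}. \<not> E z s"
    unfolding dominating_def by blast
  moreover have "E z u" if "z \<noteq> u"
    using assms(1) z that unfolding dominating_def by blast
  ultimately show ?thesis
    using that by blast
qed

lemma N1_unique_nbr:
  assumes "n \<in> N1 W E S" "a \<in> S" "a' \<in> S" "a \<in> W" "a' \<in> W" "E n a" "E n a'"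
  shows "a = a'"
proof -
  have "a \<in> cnbr W E n \<inter> S" "a' \<in> cnbr W E n \<inter> S"
    using assms by (auto simp: cnbr_def nbr_def)
  moreover have "card (cnbr W E n \<inter> S) = 1"
    using assms(1) by (simp add: N1_def)
  ultimately show ?thesis
    by (metis card_1_singletonE singletonD)
qed

lemma N1I:
  assumes "z \<in> W" "z \<notin> S" "a \<in> S" "a \<in> W" "E z a" "\<forall>s\<in>S. E z s \<longrightarrow> s = a"
  shows "z \<in> N1 W E S"
proof -
  have "cnbr W E z \<inter> S = {a}"
    using assms unfolding cnbr_def nbr_def by blast
  then show ?thesis
    using assms(1,2) by (simp add: N1_def)
qed

lemma crit_with_nbr_in_a1:
  assumes sym: "symp_on W E" and dom: "dominating W E S" and u: "u \<in> crit W E S"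
    and s: "s \<in> S - {u}" "E u s"
  shows "u \<in> a1 W E S"
proof -
  obtain z where z: "z \<in> W" "z = u \<or> z \<notin> S \<and> E z u" "\<forall>s\<in>S - {u}. \<not> E z s"
    using private_nbr[OF dom u] by metis
  then have zu: "z \<notin> S" "E z u"
    using s by auto
  have "u \<in> S" "u \<in> W"
    using u dom by (auto simp: crit_def dominating_def)
  then have "z \<in> N1 W E S"
    using z(1,3) zu by (intro N1I) auto
  moreover have "z \<in> cnbr W E u"
    using zu(2) \<open>u \<in> W\<close> z(1) symp_onD[OF sym] by (simp add: cnbr_def nbr_def)
  ultimately show ?thesis
    using u unfolding a1_def by blast
qed

lemma card_le_card_N1_nbrs:
  assumes "finite W" "symp_on W E" "S \<subseteq> W" "A \<subseteq> a1 W E S"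
  shows "card A \<le> card {w \<in> N1 W E S. \<exists>a\<in>A. E w a}" (is "_ \<le> card ?N")
proof -
  have AS: "A \<subseteq> S"
    using assms(4) unfolding a1_def crit_def by blast
  have "\<exists>w. w \<in> ?N \<and> E w a" if a: "a \<in> A" for a
  proof -
    obtain w where w: "w \<in> cnbr W E a" "w \<in> N1 W E S"
      using a assms(4) unfolding a1_def by blast
    have "a \<in> S" "a \<in> W"
      using a AS assms(3) by auto
    moreover from this have "w \<noteq> a"
      using w(2) unfolding N1_def by blast
    ultimately have "E w a"
      using w(1) symp_onD[OF assms(2)] unfolding cnbr_def nbr_def by blast
    then show ?thesis
      using w(2) a by blast
  qed
  then have "\<exists>g. \<forall>a\<in>A. g a \<in> ?N \<and> E (g a) a"
    by (rule bchoice[OF ballI])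
  then obtain g where g: "\<forall>a\<in>A. g a \<in> ?N \<and> E (g a) a"
    by blast
  have "inj_on g A"
  proof (rule inj_onI)
    fix a a' assume "a \<in> A" "a' \<in> A" "g a = g a'"
    then show "a = a'"
      using g AS assms(3) N1_unique_nbr[of "g a" W E S a a'] by (metis (no_types, lifting) mem_Collect_eq subsetD)
  qed
  moreover have "finite ?N"
    using assms(1) by (rule finite_subset[rotated]) (auto simp: N1_def)
  ultimately show ?thesis
    using g by (intro card_inj_on_le) auto
qed

section \<open>Algorithm 1\<close>

definition alg1_invariant :: "'a set \<Rightarrow> ('a \<Rightarrow> 'a \<Rightarrow> bool) \<Rightarrow> 'a \<Rightarrow> 'a set \<Rightarrow> bool" where
  "alg1_invariant W E r S \<longleftrightarrow> dominating W E S \<and> r \<in> S \<and>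
     (\<forall>v \<in> S - crit W E S. v \<noteq> r \<and>
        (\<forall>p\<in>W. E v p \<and> depth W E r p < depth W E r v \<longrightarrow> p \<notin> S))"

definition depth_sum :: "'a set \<Rightarrow> ('a \<Rightarrow> 'a \<Rightarrow> bool) \<Rightarrow> 'a \<Rightarrow> 'a set \<Rightarrow> nat" where
  "depth_sum W E r S = (\<Sum>v\<in>S. depth W E r v)"

locale alg1_step_at = rooted_tree +
  fixes S :: "'a set" and u :: 'a
  assumes invariant: "alg1_invariant W E r S" and supported: "u \<in> S - crit W E S"
begin

definition A :: "'a set" where "A = {v \<in> a1 W E S. E u v}"

definition N :: "'a set" where "N = {w \<in> N1 W E S. \<exists>v\<in>A. E w v}"

abbreviation S' :: "'a set" where "S' \<equiv> (S - A) \<union> N"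

lemma dominating: "dominating W E S"
  using invariant by (simp add: alg1_invariant_def)

lemma S_subset: "S \<subseteq> W"
  using dominating by (rule dominating_subset)

lemma u_in: "u \<in> S" "u \<in> W"
  using supported S_subset by auto

lemma supported_parent:
  assumes "v \<in> S - crit W E S" "p \<in> W" "E v p" "D p < D v"
  shows "p \<notin> S"
  using invariant assms unfolding alg1_invariant_def by blast

lemma S_nbr_depth:
  assumes "w \<in> S" "E u w"
  shows "D w = Suc (D u)"
proof -
  have "w \<in> W"
    using assms S_subset by blast
  then show ?thesis
    using depth_adjacent[OF u_in(2) _ assms(2)] supported_parent[OF supported _ assms(2)] assms(1)
    by fastforce
qed

lemma S_nbr_in_A:
  assumes "w \<in> S" "E u w"
  shows "w \<in> A"
proof -
  have "w \<in> W"
    using assms S_subset by blast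
  have "E w u"
    using sym[OF u_in(2) \<open>w \<in> W\<close> assms(2)] .
  moreover have "w \<in> crit W E S"
    using supported_parent[of w u] assms u_in S_nbr_depth[OF assms] \<open>E w u\<close> by auto
  moreover have "u \<in> S - {w}"
    using u_in no_loop[OF u_in(2)] assms(2) by auto
  ultimately have "w \<in> a1 W E S"
    using crit_with_nbr_in_a1[OF tree_symp[OF tree] dominating] by blast
  then show ?thesis
    using assms(2) by (simp add: A_def)
qed

lemma A_subset: "A \<subseteq> S" "A \<subseteq> crit W E S"
  unfolding A_def a1_def crit_def by auto

lemma A_nonempty: "A \<noteq> {}"
proof -
  have "dominating W E (S - {u})"
    using supported by (simp add: crit_def)
  then obtain s where "s \<in> S - {u}" "E u s"
    using u_in(2) unfolding dominating_def by blast
  then show ?thesis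
    using S_nbr_in_A by blast
qed

lemma depth_A: "a \<in> A \<Longrightarrow> D a = Suc (D u)"
  using S_nbr_depth A_subset by (auto simp: A_def)

lemma N_subset: "N \<subseteq> W" "N \<inter> S = {}" "N \<subseteq> N1 W E S"
  unfolding N_def N1_def by auto

lemma N_nbr_in_A:
  assumes "n \<in> N" "s \<in> S" "E n s"
  shows "s \<in> A"
proof -
  obtain a where "a \<in> A" "E n a"
    using assms(1) by (auto simp: N_def)
  moreover have "s = a"
    using N1_unique_nbr[of n W E S s a] assms calculation N_subset A_subset S_subset by blast
  ultimately show ?thesis
    by simp
qed

lemma A_nbr_depth:
  assumes y: "y \<in> W" "y \<notin> S" and a: "a \<in> A" "E y a"
  shows "D y = Suc (Suc (D u))"
proof -
  have aW: "a \<in> W"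
    using a A_subset S_subset by blast
  have "D y \<noteq> D u"
  proof
    assume "D y = D u"
    moreover have "E a u"
      using sym[OF u_in(2) aW] a by (simp add: A_def)
    ultimately have "y = u"
      using parent_unique[OF aW y(1) sym[OF y(1) aW a(2)] _ u_in(2)] depth_A[OF a(1)] by simp
    then show False
      using y u_in by blast
  qed
  then show ?thesis
    using depth_adjacent[OF y(1) aW a(2)] depth_A[OF a(1)] by auto
qed

lemma A_nbr_unique:
  assumes y: "y \<in> W" "y \<notin> S" and a: "a \<in> A" "a' \<in> A" "E y a" "E y a'"
  shows "a = a'"
  using parent_unique[OF y(1) _ a(3) _ _ a(4)] A_nbr_depth[OF y] depth_A a A_subset S_subset
  by (metis lessI subsetD)

lemma depth_N:
  assumes "n \<in> N"
  shows "D n = Suc (Suc (D u))"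
proof -
  obtain a where "a \<in> A" "E n a"
    using assms by (auto simp: N_def)
  then show ?thesis
    using A_nbr_depth assms N_subset by blast
qed

lemma N_nbr_depth:
  assumes z: "z \<in> W" "z \<notin> S" and n: "n \<in> N" "E z n"
  shows "D z = Suc (Suc (Suc (D u)))"
proof -
  obtain a where a: "a \<in> A" "E n a"
    using n by (auto simp: N_def)
  have nW: "n \<in> W" and aW: "a \<in> W"
    using n a N_subset A_subset S_subset by auto
  have "z \<noteq> a"
    using z a A_subset by blast
  then have "D z \<noteq> Suc (D u)"
    using parent_unique[OF nW z(1) sym[OF z(1) nW n(2)] _ aW a(2)] depth_N[OF n(1)] depth_A[OF a(1)]
    by auto
  then show ?thesis
    using depth_adjacent[OF nW z(1) sym[OF z(1) nW n(2)]] depth_N[OF n(1)] by auto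
qed

lemma card_A_le_card_N: "card A \<le> card N"
  unfolding N_def
  by (rule card_le_card_N1_nbrs[OF finite_W tree_symp[OF tree] S_subset]) (auto simp: A_def)

lemma finite_S: "finite S" "finite N"
  using finite_subset[OF S_subset finite_W] finite_subset[OF N_subset(1) finite_W] by auto

lemma card_le_card_S': "card S \<le> card S'"
proof -
  have "card S' = card (S - A) + card N"
    using finite_S N_subset(2) by (intro card_Un_disjoint) auto
  moreover have "card S = card (S - A) + card A"
    using card_Diff_subset[OF finite_subset[OF A_subset(1) finite_S(1)] A_subset(1)]
      card_mono[OF finite_S(1) A_subset(1)] by simp
  ultimately show ?thesis
    using card_A_le_card_N by simp
qed

lemma depth_sum_less: "depth_sum W E r S < depth_sum W E r S'"
proof -
  have "depth_sum W E r S' = depth_sum W E r (S - A) + depth_sum W E r N"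
    unfolding depth_sum_def using finite_S N_subset(2) by (intro sum.union_disjoint) auto
  also have "depth_sum W E r N = card N * Suc (Suc (D u))"
    unfolding depth_sum_def using depth_N by simp
  finally have S': "depth_sum W E r S' = depth_sum W E r (S - A) + card N * Suc (Suc (D u))" .
  have "depth_sum W E r S = depth_sum W E r (S - A) + depth_sum W E r A"
    unfolding depth_sum_def by (rule sum.subset_diff[OF A_subset(1) finite_S(1)])
  also have "depth_sum W E r A = card A * Suc (D u)"
    unfolding depth_sum_def using depth_A by simp
  finally have S: "depth_sum W E r S = depth_sum W E r (S - A) + card A * Suc (D u)" .
  have "0 < card A"
    using A_nonempty finite_subset[OF A_subset(1) finite_S(1)] by auto
  then have "card A * Suc (D u) < card N * Suc (Suc (D u))"
    using card_A_le_card_N mult_le_mono1[OF card_A_le_card_N, of "Suc (D u)"] by simp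
  then show ?thesis
    using S S' by simp
qed

lemma dominating_S': "dominating W E S'"
  unfolding dominating_def
proof (intro conjI ballI)
  show "S' \<subseteq> W"
    using S_subset N_subset by blast
next
  fix y assume yW: "y \<in> W"
  show "y \<in> S' \<or> (\<exists>s\<in>S'. E y s)"
  proof (cases "y \<in> S")
    case True
    moreover have "u \<in> S'"
      using u_in A_subset(2) supported by blast
    ultimately show ?thesis
      using sym[OF u_in(2) yW] by (auto simp: A_def)
  next
    case yS: False
    obtain s where s: "s \<in> S" "E y s"
      using dominating yW yS unfolding dominating_def by blast
    show ?thesis
    proof (cases "\<exists>s'\<in>S - A. E y s'")
      case False
      then have sA: "s \<in> A"
        using s by blast
      have sW: "s \<in> W"
        using s S_subset by blast
      show ?thesis
      proof (cases "\<forall>s'\<in>S. E y s' \<longrightarrow> s' = s")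
        case True
        then have "y \<in> N1 W E S"
          using N1I[of y W S s E] yW yS s sW by blast
        then show ?thesis
          using sA s(2) by (auto simp: N_def)
      next
        case False
        then obtain s' where s': "s' \<in> S" "E y s'" "s' \<noteq> s"
          by blast
        have "s' \<in> A"
          using s' \<open>\<not> (\<exists>s'\<in>S - A. E y s')\<close> by blast
        then have "s = s'"
          using A_nbr_unique[OF yW yS sA _ s(2) s'(2)] by blast
        then show ?thesis
          using s'(3) by blast
      qed
    qed blast
  qed
qed

lemma root_in_S': "r \<in> S'"
proof -
  have "r \<in> S"
    using invariant by (simp add: alg1_invariant_def)
  moreover have "r \<notin> A"
    using depth_A depth_root by force
  ultimately show ?thesis
    by blast
qed

lemma supported_S'_in_S:
  assumes v: "v \<in> S' - crit W E S'"
  shows "v \<in> S - A"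
proof -
  have "dominating W E (S' - {v})"
    using v unfolding crit_def by blast
  moreover have vW: "v \<in> W"
    using v S_subset N_subset by blast
  ultimately obtain s where s: "s \<in> S' - {v}" "E v s"
    unfolding dominating_def by blast
  have "v \<notin> N"
  proof
    assume vN: "v \<in> N"
    show False
    proof (cases "s \<in> N")
      case True
      then show False
        using depth_adjacent[OF vW _ s(2)] depth_N vN N_subset by force
    next
      case False
      then show False
        using s N_nbr_in_A[OF vN _ s(2)] by blast
    qed
  qed
  then show ?thesis
    using v by blast
qed

lemma crit_private_nbr_below_N:
  assumes v: "v \<in> S' - crit W E S'" "v \<in> crit W E S"
  obtains z n where "z \<in> W" "z \<notin> S" "E z v" "n \<in> N" "n \<noteq> v" "E z n"
proof -
  have vSA: "v \<in> S - A"
    using supported_S'_in_S[OF v(1)] .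
  obtain z where z: "z \<in> W" "z = v \<or> z \<notin> S \<and> E z v" "\<forall>s\<in>S - {v}. \<not> E z s"
    using private_nbr[OF dominating v(2)] by metis
  have "z \<notin> S' - {v}"
  proof
    assume "z \<in> S' - {v}"
    then obtain a where "a \<in> A" "E z a"
      using z by (auto simp: N_def)
    then show False
      using z(3) vSA A_subset by blast
  qed
  moreover have "dominating W E (S' - {v})"
    using v(1) unfolding crit_def by blast
  ultimately obtain n where n: "n \<in> S' - {v}" "E z n"
    using z(1) unfolding dominating_def by blast
  then have nN: "n \<in> N"
    using z(3) by blast
  have "z \<noteq> v"
  proof
    assume "z = v"
    then have "v \<in> A"
      using N_nbr_in_A[OF nN] vSA sym[OF z(1)] N_subset nN n by blast
    then show False
      using vSA by blast
  qed
  then show ?thesis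
    using that z(1,2) nN n by blast
qed

text \<open>The private neighbour \<open>z\<close> of \<open>v\<close> lies below a vertex of \<open>N\<close>, so \<open>v\<close> is four
  levels below \<open>u\<close> and its parent \<open>z\<close> is outside \<open>S'\<close>.\<close>

lemma crit_becomes_supported:
  assumes v: "v \<in> S' - crit W E S'" "v \<in> crit W E S"
  obtains z where "z \<in> W" "z \<notin> S'" "E v z" "D z < D v"
proof -
  obtain z n where z: "z \<in> W" "z \<notin> S" "E z v" and n: "n \<in> N" "n \<noteq> v" "E z n"
    using crit_private_nbr_below_N[OF v] by metis
  have vW: "v \<in> W" and nW: "n \<in> W"
    using supported_S'_in_S[OF v(1)] S_subset n N_subset by auto
  have dz: "D z = Suc (Suc (Suc (D u)))"
    using N_nbr_depth[OF z(1,2) n(1,3)] .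
  have "D v \<noteq> Suc (Suc (D u))"
    using parent_unique[OF z(1) vW z(3) _ nW n(3)] dz depth_N[OF n(1)] n(2) by auto
  then have "D z < D v"
    using depth_adjacent[OF vW z(1) sym[OF z(1) vW z(3)]] dz by auto
  moreover have "z \<notin> N"
    using depth_N dz by force
  ultimately show ?thesis
    using that z sym[OF z(1) vW z(3)] by blast
qed

lemma supported_S'_parent:
  assumes v: "v \<in> S' - crit W E S'" and p: "p \<in> W" "E v p" "D p < D v"
  shows "p \<notin> S'"
proof (cases "v \<in> crit W E S")
  case True
  obtain z where z: "z \<in> W" "z \<notin> S'" "E v z" "D z < D v"
    using crit_becomes_supported[OF v True] by metis
  have "v \<in> W"
    using v S_subset N_subset by blast
  then have "p = z"
    using parent_unique[OF _ p z(1) z(3) z(4)] by simp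
  then show ?thesis
    using z(2) by simp
next
  case False
  have vSA: "v \<in> S - A"
    using supported_S'_in_S[OF v] .
  then have "p \<notin> S"
    using supported_parent[OF _ p] False by blast
  moreover have "p \<notin> N"
  proof
    assume "p \<in> N"
    moreover have "v \<in> W"
      using vSA S_subset by blast
    ultimately have "v \<in> A"
      using N_nbr_in_A[of p v] vSA sym[OF _ p(1) p(2)] by blast
    then show False
      using vSA by blast
  qed
  ultimately show ?thesis
    by blast
qed

lemma supported_S'_not_root:
  assumes v: "v \<in> S' - crit W E S'"
  shows "v \<noteq> r"
proof (cases "v \<in> crit W E S")
  case True
  obtain z where "D z < D v"
    using crit_becomes_supported[OF v True] by metis
  then show ?thesis
    using depth_root by auto
next
  case False
  then show ?thesis
    using invariant supported_S'_in_S[OF v] unfolding alg1_invariant_def by blast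
qed

lemma invariant_S': "alg1_invariant W E r S'"
  unfolding alg1_invariant_def
proof (intro conjI ballI allI impI)
  fix v p assume "v \<in> S' - crit W E S'" "p \<in> W" "E v p \<and> D p < D v"
  then show "p \<notin> S'"
    using supported_S'_parent by blast
qed (use dominating_S' root_in_S' supported_S'_not_root in auto)

end

context rooted_tree
begin

lemma alg1_invariant_subset: "alg1_invariant W E r S \<Longrightarrow> S \<subseteq> W"
  by (simp add: alg1_invariant_def dominating_def)

lemma depth_sum_le: "S \<subseteq> W \<Longrightarrow> depth_sum W E r S \<le> depth_sum W E r W"
  unfolding depth_sum_def using finite_W by (rule sum_mono2) auto

lemma alg1_step_invariant:
  assumes inv: "alg1_invariant W E r S" and step: "alg1_step W E r S S1"
  shows "alg1_invariant W E r S1 \<and> card S \<le> card S1 \<and> depth_sum W E r S < depth_sum W E r S1"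
proof -
  obtain u where u: "u \<in> S - crit W E S"
    and S1: "S1 = (S - {v \<in> a1 W E S. E u v}) \<union> {w \<in> N1 W E S. \<exists>v\<in>{v \<in> a1 W E S. E u v}. E w v}"
    using step unfolding alg1_step_def Let_def by blast
  interpret alg1_step_at W E r S u
    using inv u by unfold_locales
  have "S1 = S'"
    using S1 by (simp add: A_def N_def)
  then show ?thesis
    using invariant_S' card_le_card_S' depth_sum_less by simp
qed

lemma alg1_step_exists:
  assumes dom: "dominating W E S" and not_min: "\<not> min_dominating W E S"
  shows "\<exists>S1. alg1_step W E r S S1"
proof -
  obtain u0 where "u0 \<in> S - crit W E S"
    using dom not_min unfolding min_dominating_iff crit_def by blast
  then obtain u where u: "u \<in> S - crit W E S" and least: "\<forall>w \<in> S - crit W E S. D u \<le> D w"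
    using ex_has_least_nat[of "\<lambda>v. v \<in> S - crit W E S" u0 D] by blast
  let ?A = "{v \<in> a1 W E S. E u v}"
  have "alg1_step W E r S ((S - ?A) \<union> {w \<in> N1 W E S. \<exists>v\<in>?A. E w v})"
    unfolding alg1_step_def Let_def using not_min u least by blast
  then show ?thesis ..
qed

lemma alg1_terminates_if_invariant:
  assumes inv: "alg1_invariant W E r S"
  shows "alg1_terminates W E r S"
  unfolding alg1_terminates_def
proof
  assume "\<exists>f. f 0 = S \<and> (\<forall>i. alg1_step W E r (f i) (f (Suc i)))"
  then obtain f where f0: "f 0 = S" and steps: "\<And>i. alg1_step W E r (f i) (f (Suc i))"
    by blast
  have chain: "alg1_invariant W E r (f i) \<and> i \<le> depth_sum W E r (f i)" for i
  proof (induction i)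
    case 0
    then show ?case using f0 inv by simp
  next
    case (Suc i)
    then show ?case
      using alg1_step_invariant[OF _ steps[of i]] by fastforce
  qed
  then have "Suc (depth_sum W E r W) \<le> depth_sum W E r W"
    using depth_sum_le[OF alg1_invariant_subset] le_trans by blast
  then show False
    by simp
qed

lemma alg1_result_exists:
  assumes "alg1_invariant W E r S"
  shows "\<exists>R. alg1_result W E r S R"
  using assms
proof (induction "depth_sum W E r W - depth_sum W E r S" arbitrary: S rule: less_induct)
  case less
  show ?case
  proof (cases "min_dominating W E S")
    case True
    then show ?thesis
      using alg1_result.stop[of W E S r] by blast
  next
    case False
    then obtain S1 where step: "alg1_step W E r S S1"
      using alg1_step_exists less.prems by (auto simp: alg1_invariant_def)
    then have S1: "alg1_invariant W E r S1" "depth_sum W E r S < depth_sum W E r S1"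
      using alg1_step_invariant[OF less.prems] by auto
    moreover have "depth_sum W E r S1 \<le> depth_sum W E r W"
      using depth_sum_le[OF alg1_invariant_subset[OF S1(1)]] .
    ultimately have "depth_sum W E r W - depth_sum W E r S1 < depth_sum W E r W - depth_sum W E r S"
      by linarith
    then obtain R where "alg1_result W E r S1 R"
      using less.hyps[of S1] S1(1) by blast
    then show ?thesis
      using alg1_result.step[OF step] by blast
  qed
qed

lemma alg1_result_props:
  assumes "alg1_result W E r S R" "alg1_invariant W E r S"
  shows "min_dominating W E R \<and> r \<in> R \<and> card S \<le> card R"
  using assms
proof (induction rule: alg1_result.induct)
  case (stop S)
  then show ?case
    by (simp add: alg1_invariant_def)
next
  case (step S S1 R)
  then show ?case
    using alg1_step_invariant[OF step.prems step.hyps(1)] le_trans by blast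
qed

end

section \<open>The subtrees of Algorithm 2\<close>

locale alg2_setting =
  fixes V :: "'a set" and E :: "'a \<Rightarrow> 'a \<Rightarrow> bool" and M X :: "'a set"
  assumes tree: "is_tree V E"
    and minM: "min_dominating V E M"
    and XN2: "X \<subseteq> N2 V E M"
    and conn: "connected_graph ((nbrs V E X \<inter> a2 V E M) \<union> X) E"
    and indep: "\<forall>u\<in>X. \<forall>v\<in>X. \<not> E u v"
begin

abbreviation A2 :: "'a set" where "A2 \<equiv> nbrs V E X \<inter> a2 V E M"

abbreviation T :: "'a \<Rightarrow> 'a set" where "T x \<equiv> sub_vertices V E A2 x"

lemma finite_V: "finite V"
  using tree by (simp add: is_tree_def)

lemma symp: "symp_on V E"
  using tree by (rule tree_symp)

lemma sym: "u \<in> V \<Longrightarrow> v \<in> V \<Longrightarrow> E u v \<Longrightarrow> E v u"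
  using symp by (rule symp_onD)

lemma dominating_M: "dominating V E M"
  using minM by (simp add: min_dominating_def)

lemma crit_M: "crit V E M = M"
  using minM by (rule min_dominating_crit)

lemma M_subset: "M \<subseteq> V"
  using dominating_M by (rule dominating_subset)

lemma X_subset: "X \<subseteq> V" and X_M_disjoint: "X \<inter> M = {}"
  using XN2 by (auto simp: N2_def)

lemma A2_subset_M: "A2 \<subseteq> M"
  by (auto simp: a2_def crit_def)

lemma in_nbrs: "v \<in> nbrs V E S \<longleftrightarrow> v \<in> V \<and> (\<exists>s\<in>S. E s v)"
  by (auto simp: nbrs_def nbr_def)

lemma T_subset: "T x \<subseteq> V"
  by (auto simp: sub_vertices_def)

lemma T_path:
  assumes "y \<in> T x" "x \<in> V"
  obtains P where "walk V E P" "distinct P" "hd P = y" "last P = x" "set P \<inter> A2 = {}"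
proof -
  obtain P where P: "walk V E P" "distinct P" "hd P = y" "last P = x"
    using tree_path_exists[OF tree _ assms(2)] assms(1) T_subset by blast
  then have "set P \<inter> A2 = {}"
    using assms(1) unfolding sub_vertices_def descendant_def by blast
  then show ?thesis
    using that P by blast
qed

lemma T_memI:
  assumes x: "x \<in> V" and P: "walk V E P" "hd P = y" "last P = x" "set P \<inter> A2 = {}"
  shows "y \<in> T x"
proof -
  obtain P' where P': "walk V E P'" "distinct P'" "hd P' = y" "last P' = x" "set P' \<subseteq> set P"
    using walk_shortcut[OF P(1)] P by metis
  have "\<not> descendant V E x y z" if "z \<in> A2" for z
  proof
    assume "descendant V E x y z"
    then obtain Q where "walk V E Q" "distinct Q" "hd Q = y" "last Q = x" "z \<in> set Q"
      unfolding descendant_def by blast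
    moreover from this have "Q = P'"
      using tree_path_unique[OF tree _ _ P'(1,2)] P' by simp
    ultimately show False
      using P'(5) P(4) \<open>z \<in> A2\<close> by blast
  qed
  moreover have "y \<in> V"
    using P walk_set_subset walk_not_Nil by (metis hd_in_set subsetD)
  ultimately show ?thesis
    unfolding sub_vertices_def by blast
qed

lemma T_nbr_closed:
  assumes "y \<in> T x" "x \<in> V" "z \<in> V" "E z y" "z \<notin> A2"
  shows "z \<in> T x"
proof -
  obtain P where P: "walk V E P" "hd P = y" "last P = x" "set P \<inter> A2 = {}"
    using T_path[OF assms(1,2)] by metis
  then have "walk V E (z # P)" "last (z # P) = x"
    using assms(3,4) walk_not_Nil[OF P(1)] by (simp_all add: walk_Cons)
  then show ?thesis
    using T_memI[OF assms(2), of "z # P"] P(4) assms(5) by simp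
qed

lemma T_A2_disjoint: "x \<in> V \<Longrightarrow> A2 \<inter> T x = {}"
  using T_path walk_not_Nil by (metis disjoint_iff hd_in_set)

lemma root_in_T: "x \<in> X \<Longrightarrow> x \<in> T x"
  using T_memI[of x "[x]" x] X_subset A2_subset_M X_M_disjoint by (auto simp: walk_def)

lemma is_tree_T:
  assumes x: "x \<in> X"
  shows "is_tree (T x) E"
proof -
  have xV: "x \<in> V"
    using x X_subset by blast
  have path_to_root: "\<exists>P. walk (T x) E P \<and> hd P = y \<and> last P = x" if y: "y \<in> T x" for y
  proof -
    obtain P where P: "walk V E P" "hd P = y" "last P = x" "set P \<inter> A2 = {}"
      using T_path[OF y xV] by metis
    have "w \<in> T x" if "w \<in> set P" for w
    proof -
      obtain as bs where "P = as @ w # bs"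
        using split_list[OF \<open>w \<in> set P\<close>] by blast
      then show ?thesis
        using T_memI[OF xV, of "w # bs"] walk_suffix[of V E as w bs] P by auto
    qed
    then show ?thesis
      using walk_mono[OF P(1)] P by blast
  qed
  have symT: "symp_on (T x) E"
    using symp T_subset by (meson symp_on_subset)
  have "connected_graph (T x) E"
    unfolding connected_graph_def
  proof (intro ballI)
    fix u v assume "u \<in> T x" "v \<in> T x"
    then obtain P Q where P: "walk (T x) E P" "hd P = u" "last P = x"
      and Q: "walk (T x) E Q" "hd Q = v" "last Q = x"
      using path_to_root by metis
    moreover have "walk (T x) E (rev Q)" "hd (rev Q) = x" "last (rev Q) = v"
      using walk_rev[OF symT Q(1)] Q walk_not_Nil[OF Q(1)] by (simp_all add: hd_rev last_rev)
    ultimately show "\<exists>xs. walk (T x) E xs \<and> hd xs = u \<and> last xs = v"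
      using walk_join[of "T x" E P "rev Q"] by metis
  qed
  moreover have "\<not> (\<exists>cs. is_cycle (T x) E cs)"
    using tree T_subset unfolding is_tree_def is_cycle_def walk_def by blast
  moreover have "finite (T x)" "T x \<noteq> {}"
    using finite_subset[OF T_subset finite_V] root_in_T[OF x] by auto
  ultimately show ?thesis
    using tree T_subset symT unfolding is_tree_def symp_on_def by blast
qed

lemma A2_X_path:
  assumes "u \<in> A2 \<union> X" "v \<in> A2 \<union> X"
  obtains Q where "walk V E Q" "distinct Q" "hd Q = u" "last Q = v" "set Q \<subseteq> A2 \<union> X"
proof -
  obtain Q where "walk (A2 \<union> X) E Q" "hd Q = u" "last Q = v"
    using conn assms unfolding connected_graph_def by blast
  then obtain Q' where Q': "walk (A2 \<union> X) E Q'" "distinct Q'" "hd Q' = u" "last Q' = v"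
    using walk_shortcut by metis
  moreover have "A2 \<union> X \<subseteq> V"
    using A2_subset_M M_subset X_subset by blast
  ultimately show ?thesis
    using that walk_set_subset[OF Q'(1)] walk_mono[OF Q'(1)] by blast
qed

lemma X_in_T:
  assumes x: "x \<in> X" and x': "x' \<in> X" "x' \<in> T x"
  shows "x' = x"
proof (rule ccontr)
  assume "x' \<noteq> x"
  obtain Q where Q: "walk V E Q" "distinct Q" "hd Q = x'" "last Q = x" "set Q \<subseteq> A2 \<union> X"
    using A2_X_path[of x' x] x x'(1) by blast
  then obtain q Q' where Q_eq: "Q = x' # q # Q'"
    using \<open>x' \<noteq> x\<close> walk_not_Nil[OF Q(1)] by (cases Q rule: remdups_adj.cases) auto
  then have "q \<in> A2"
    using Q indep x'(1) by (auto simp: walk_Cons_Cons)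
  moreover have "descendant V E x x' q"
    unfolding descendant_def using Q Q_eq by auto
  ultimately show False
    using x'(2) unfolding sub_vertices_def by blast
qed

lemma T_disjoint:
  assumes x: "x \<in> X" "x' \<in> X" "x \<noteq> x'"
  shows "T x \<inter> T x' = {}"
proof (rule ccontr)
  assume "T x \<inter> T x' \<noteq> {}"
  then obtain y where y: "y \<in> T x" "y \<in> T x'"
    by blast
  have xV: "x \<in> V" "x' \<in> V"
    using x X_subset by auto
  obtain P where P: "walk V E P" "hd P = y" "last P = x" "set P \<inter> A2 = {}"
    using T_path[OF y(1) xV(1)] by metis
  obtain P' where P': "walk V E P'" "hd P' = y" "last P' = x'" "set P' \<inter> A2 = {}"
    using T_path[OF y(2) xV(2)] by metis
  have "walk V E (rev P')" "hd (rev P') = x'" "last (rev P') = y"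
    using walk_rev[OF symp P'(1)] P' walk_not_Nil[OF P'(1)] by (simp_all add: hd_rev last_rev)
  then have "walk V E (rev P' @ tl P)" "hd (rev P' @ tl P) = x'" "last (rev P' @ tl P) = x"
    using walk_join[of V E "rev P'" P] P by simp_all
  moreover have "set (rev P' @ tl P) \<inter> A2 = {}"
    using P(4) P'(4) list.set_sel(2)[of P] by (cases "P = []") auto
  ultimately have "x' \<in> T x"
    using T_memI[OF xV(1)] by blast
  then show False
    using X_in_T x by blast
qed

lemma T_A2_nbr_is_root:
  assumes x: "x \<in> X" and y: "y \<in> T x" and a: "a \<in> A2" "E y a"
  shows "y = x"
proof -
  have xV: "x \<in> V" and aV: "a \<in> V" and yV: "y \<in> V"
    using x X_subset a(1) A2_subset_M M_subset y T_subset by blast+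
  obtain Q where Q: "walk V E Q" "distinct Q" "hd Q = a" "last Q = x" "set Q \<subseteq> A2 \<union> X"
    using A2_X_path[of a x] x a by blast
  obtain P where P: "walk V E P" "distinct P" "hd P = y" "last P = x" "set P \<inter> A2 = {}"
    using T_path[OF y xV] by metis
  have "walk V E (a # P)" "distinct (a # P)" "last (a # P) = x"
    using P a aV sym[OF yV aV a(2)] walk_not_Nil[OF P(1)] by (auto simp: walk_Cons)
  then have "Q = a # P"
    using tree_path_unique[OF tree Q(1,2)] Q by simp
  then have "y \<in> A2 \<union> X"
    using Q(5) P(3) walk_not_Nil[OF P(1)] by (cases P) auto
  moreover have "y \<notin> A2"
    using T_A2_disjoint[OF xV] y by blast
  ultimately show ?thesis
    using X_in_T[OF x _ y] by blast
qed

lemma A2_nbr_unique: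
  assumes y: "y \<in> V" "y \<notin> A2 \<union> X" and a: "a \<in> A2" "a' \<in> A2" and e: "E y a" "E y a'"
  shows "a = a'"
proof (rule ccontr)
  assume "a \<noteq> a'"
  have aV: "a \<in> V" "a' \<in> V"
    using a A2_subset_M M_subset by auto
  obtain Q where Q: "walk V E Q" "distinct Q" "hd Q = a" "last Q = a'" "set Q \<subseteq> A2 \<union> X"
    using A2_X_path[of a a'] a by blast
  have "walk V E [a, y, a']" "distinct [a, y, a']"
    using y aV e sym[OF y(1) aV(1) e(1)] \<open>a \<noteq> a'\<close> a by (auto simp: walk_Cons_Cons walk_def)
  then have "Q = [a, y, a']"
    using tree_path_unique[OF tree Q(1,2)] Q by simp
  then show False
    using Q(5) y by simp
qed

end

context alg2_setting
begin

abbreviation A :: "'a set" where "A \<equiv> nbrs V E X \<inter> crit V E M"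

abbreviation N :: "'a set" where "N \<equiv> nbrs V E A \<inter> N1 V E M"

abbreviation M0 :: "'a set" where "M0 \<equiv> alg2_init V E M X"

lemma init_eq: "M0 = ((M \<union> X) - A) \<union> N"
  by (simp add: alg2_init_def Let_def)

lemma A_eq: "A = nbrs V E X \<inter> M"
  using crit_M by simp

lemma A2_subset_A: "A2 \<subseteq> A"
  by (auto simp: a2_def)

lemma A_subset_M: "A \<subseteq> M"
  using A_eq by blast

lemma N_subset: "N \<subseteq> V" "N \<inter> M = {}" "N \<inter> X = {}"
  using XN2 by (auto simp: N1_def N2_def)

lemma N_nbr:
  assumes "n \<in> N"
  obtains a where "a \<in> A - A2" "E a n" "E n a"
proof -
  obtain a where a: "a \<in> A" "E a n"
    using assms in_nbrs by blast
  have nV: "n \<in> V" and aV: "a \<in> V"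
    using assms N_subset a A_subset_M M_subset by auto
  have "n \<in> cnbr V E a"
    using nV a(2) by (simp add: cnbr_def nbr_def)
  then have "a \<notin> A2"
    using assms unfolding a2_def by blast
  then show ?thesis
    using that a sym[OF aV nV a(2)] by blast
qed

lemma A_nbr_X:
  assumes "a \<in> A"
  obtains x where "x \<in> X" "E x a" "E a x"
  using assms in_nbrs[of a X] sym X_subset by blast

lemma A_in_T: "a \<in> A - A2 \<Longrightarrow> x \<in> X \<Longrightarrow> E a x \<Longrightarrow> a \<in> T x"
  using T_nbr_closed[OF root_in_T, of x a] X_subset A_subset_M M_subset by blast

lemma A_in_T_adj_root:
  assumes x: "x \<in> X" and a: "a \<in> A" "a \<in> T x"
  shows "E x a"
proof -
  obtain x' where x': "x' \<in> X" "E x' a" "E a x'"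
    using A_nbr_X[OF a(1)] by metis
  have "x' \<notin> A2"
    using x' A2_subset_M X_M_disjoint by blast
  then have "x' \<in> T x"
    using T_nbr_closed[OF a(2) _ _ x'(2)] x x' X_subset by blast
  then have "x' = x"
    using X_in_T[OF x x'(1)] by blast
  then show ?thesis
    using x' by simp
qed

lemma N_M_nbr:
  assumes "n \<in> N" "m \<in> M" "E n m"
  shows "m \<in> A - A2"
proof -
  obtain a where a: "a \<in> A - A2" "E n a"
    using N_nbr[OF assms(1)] by metis
  moreover have "m = a"
    using N1_unique_nbr[of n V E M m a] assms a A_subset_M M_subset by blast
  ultimately show ?thesis
    by simp
qed

lemma X_nbr_in_A: "v \<in> M \<Longrightarrow> x \<in> X \<Longrightarrow> E x v \<Longrightarrow> v \<in> A"
  using A_eq in_nbrs M_subset by blast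

lemma init_outside_T:
  assumes v: "\<forall>x\<in>X. v \<notin> T x"
  shows "v \<in> M0 \<longleftrightarrow> v \<in> M \<and> v \<notin> A2"
proof
  assume "v \<in> M0"
  moreover have "v \<notin> X"
    using v root_in_T by blast
  moreover have "v \<notin> N"
  proof
    assume vN: "v \<in> N"
    obtain a where a: "a \<in> A - A2" "E a v" "E v a"
      using N_nbr[OF vN] by metis
    obtain x where x: "x \<in> X" "E x a" "E a x"
      using A_nbr_X a by blast
    have "v \<notin> A2"
      using vN N_subset A2_subset_M by blast
    then have "v \<in> T x"
      using T_nbr_closed[OF A_in_T[OF a(1) x(1,3)] _ _ a(3)] x(1) vN N_subset X_subset by blast
    then show False
      using v x by blast
  qed
  ultimately show "v \<in> M \<and> v \<notin> A2"
    using A2_subset_A unfolding init_eq by blast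
next
  assume vM: "v \<in> M \<and> v \<notin> A2"
  have "v \<notin> A"
  proof
    assume "v \<in> A"
    then obtain x where "x \<in> X" "E v x"
      using A_nbr_X by metis
    then show False
      using A_in_T vM \<open>v \<in> A\<close> v by blast
  qed
  then show "v \<in> M0"
    using vM unfolding init_eq by blast
qed

lemma card_init: "int (card M) - int (card A2) + int (card X) \<le> int (card M0)"
proof -
  have fin: "finite M" "finite X" "finite N"
    using finite_subset[OF M_subset finite_V] finite_subset[OF X_subset finite_V]
      finite_subset[OF N_subset(1) finite_V] by auto
  have finA: "finite A"
    using finite_subset[OF A_subset_M fin(1)] .
  have "card M0 = card ((M \<union> X) - A) + card N"
    unfolding init_eq using fin N_subset by (intro card_Un_disjoint) auto
  moreover have "card ((M \<union> X) - A) = card (M \<union> X) - card A"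
    using finA A_subset_M by (intro card_Diff_subset) auto
  moreover have "card (M \<union> X) = card M + card X"
    using fin X_M_disjoint by (intro card_Un_disjoint) auto
  moreover have "card A \<le> card M"
    using fin A_subset_M by (intro card_mono) auto
  moreover have "card A = card (A - A2) + card A2"
    using card_Diff_subset[OF finite_subset[OF A2_subset_A finA] A2_subset_A]
      card_mono[OF finA A2_subset_A] by simp
  moreover have "card (A - A2) \<le> card N"
  proof -
    have "A - A2 \<subseteq> a1 V E M"
      unfolding a1_def a2_def by blast
    then have "card (A - A2) \<le> card {w \<in> N1 V E M. \<exists>a\<in>A - A2. E w a}"
      by (rule card_le_card_N1_nbrs[OF finite_V symp M_subset])
    also have "\<dots> \<le> card N"
    proof (rule card_mono[OF fin(3)])
      show "{w \<in> N1 V E M. \<exists>a\<in>A - A2. E w a} \<subseteq> N"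
        using A_subset_M M_subset sym in_nbrs unfolding N1_def by blast
    qed
    finally show ?thesis .
  qed
  ultimately show ?thesis
    by linarith
qed

end

locale alg2_subtree = alg2_setting +
  fixes x :: 'a
  assumes x_in: "x \<in> X"
begin

sublocale sub: rooted_tree "T x" E x
  using is_tree_T root_in_T x_in by unfold_locales auto

abbreviation S0 :: "'a set" where "S0 \<equiv> M0 \<inter> T x"

lemma x_V: "x \<in> V"
  using x_in X_subset by blast

lemma root_in_S0: "x \<in> S0"
  using x_in root_in_T X_M_disjoint A_subset_M unfolding init_eq by blast

lemma S0_cases:
  assumes "s \<in> S0"
  obtains "s \<in> M - A" | "s = x" | "s \<in> N"
  using assms X_in_T[OF x_in] unfolding init_eq by blast

lemma depth_A:
  assumes "a \<in> A" "a \<in> T x"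
  shows "sub.D a = 1" "E x a"
  using sub.depth_root_nbr[OF assms(2)] A_in_T_adj_root[OF x_in assms] sym x_V
    T_subset assms(2) by blast+

lemma depth_N:
  assumes "n \<in> N" "n \<in> T x"
  obtains a where "a \<in> A - A2" "a \<in> T x" "E n a" "sub.D a = 1" "sub.D n = 2"
proof -
  obtain a where a: "a \<in> A - A2" "E a n" "E n a"
    using N_nbr[OF assms(1)] by metis
  have "a \<in> V"
    using a A_subset_M M_subset by blast
  then have aT: "a \<in> T x"
    using T_nbr_closed[OF assms(2) x_V _ a(2)] a by blast
  have "n \<noteq> x"
    using assms N_subset x_in by blast
  then have "sub.D n \<noteq> 0"
    using sub.depth_eq_0_iff assms(2) by blast
  then have "sub.D n = 2"
    using sub.depth_adjacent[OF assms(2) aT a(3)] depth_A[of a] a aT by auto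
  then show ?thesis
    using that a aT depth_A[of a] by blast
qed

lemma A_nbr_unique:
  assumes y: "y \<in> T x" "y \<noteq> x" and m: "m \<in> A" "m' \<in> A" "E y m" "E y m'"
  shows "m = m'"
proof -
  have yV: "y \<in> V" and mV: "m \<in> V" "m' \<in> V"
    using y T_subset m A_subset_M M_subset by auto
  have "m \<notin> A2" "m' \<notin> A2"
    using T_A2_nbr_is_root[OF x_in y(1)] m y(2) by auto
  then have mT: "m \<in> T x" "m' \<in> T x"
    using T_nbr_closed[OF y(1) x_V] mV sym[OF yV] m(3,4) by auto
  then have "sub.D m = 1" "sub.D m' = 1"
    using depth_A m by auto
  moreover have "sub.D y = 2"
    using sub.depth_adjacent[OF y(1) mT(1) m(3)] sub.depth_eq_0_iff[OF y(1)] y(2)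
      \<open>sub.D m = 1\<close> by auto
  ultimately show ?thesis
    using sub.parent_unique[OF y(1) mT(1) m(3) _ mT(2) m(4)] by simp
qed

lemma init_dominating: "dominating (T x) E S0"
  unfolding dominating_def
proof (intro conjI ballI)
  fix y assume yT: "y \<in> T x"
  have yV: "y \<in> V"
    using yT T_subset by blast
  show "y \<in> S0 \<or> (\<exists>s\<in>S0. E y s)"
  proof (cases "y = x \<or> y \<in> M")
    case True
    then show ?thesis
      using root_in_S0 yT depth_A(2) sym[OF x_V yV] unfolding init_eq by blast
  next
    case False
    then have yx: "y \<noteq> x" and yM: "y \<notin> M"
      by auto
    obtain m where m: "m \<in> M" "E y m"
      using dominating_M yV yM unfolding dominating_def by blast
    have mV: "m \<in> V"
      using m M_subset by blast
    show ?thesis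
    proof (cases "\<exists>m'\<in>M - A. E y m'")
      case True
      then obtain m' where m': "m' \<in> M - A" "E y m'"
        by blast
      then have "m' \<in> T x"
        using T_nbr_closed[OF yT x_V _ sym[OF yV _ m'(2)]] A2_subset_A M_subset by blast
      then show ?thesis
        using m' unfolding init_eq by blast
    next
      case False
      then have "s = m" if "s \<in> M" "E y s" for s
        using A_nbr_unique[OF yT yx _ _ m(2) that(2)] m that by blast
      then have "y \<in> N1 V E M"
        using N1I[of y V M m E] yV yM m mV by blast
      moreover have "y \<in> nbrs V E A"
        using in_nbrs False m sym[OF yV mV m(2)] yV by blast
      ultimately show ?thesis
        using yT unfolding init_eq by blast
    qed
  qed
qed (use T_subset in blast)

lemma supported_init_nbr:
  assumes "v \<in> S0 - crit (T x) E S0"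
  obtains s where "s \<in> S0 - {v}" "E v s"
proof -
  have "dominating (T x) E (S0 - {v})"
    using assms unfolding crit_def by blast
  then show ?thesis
    using that assms unfolding dominating_def by blast
qed

lemma supported_init_not_root:
  assumes v: "v \<in> S0 - crit (T x) E S0"
  shows "v \<noteq> x"
proof
  assume vx: "v = x"
  obtain s where s: "s \<in> S0 - {v}" "E v s"
    using supported_init_nbr[OF v] by metis
  have sT: "s \<in> T x" and sV: "s \<in> V"
    using s T_subset by auto
  have "s \<in> S0"
    using s by blast
  then show False
  proof (cases rule: S0_cases)
    case 1
    then show False
      using X_nbr_in_A[of s x] vx s(2) x_in by blast
  next
    case 3
    then obtain a where "sub.D s = 2"
      using depth_N sT by metis
    moreover have "sub.D s = 1"
      using sub.depth_root_nbr[OF sT] sym[OF _ sV s(2)] vx x_V by simp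
    ultimately show False
      by simp
  qed (use s vx in simp)
qed

lemma supported_init_not_N:
  assumes v: "v \<in> S0 - crit (T x) E S0"
  shows "v \<notin> N"
proof
  assume vN: "v \<in> N"
  obtain s where s: "s \<in> S0 - {v}" "E v s"
    using supported_init_nbr[OF v] by metis
  have vT: "v \<in> T x" and sT: "s \<in> T x"
    using v s by auto
  obtain a where a: "sub.D v = 2"
    using depth_N[OF vN vT] by metis
  have "s \<in> S0"
    using s by blast
  then show False
  proof (cases rule: S0_cases)
    case 1
    then show False
      using N_M_nbr[OF vN _ s(2)] by blast
  next
    case 2
    then show False
      using sub.depth_root_nbr[OF vT] s(2) a by simp
  next
    case 3
    then show False
      using depth_N[OF _ sT] sub.depth_adjacent[OF vT sT s(2)] a by (metis n_not_Suc_n)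
  qed
qed

lemma supported_init_in_M: "v \<in> S0 - crit (T x) E S0 \<Longrightarrow> v \<in> M - A"
  using supported_init_not_root supported_init_not_N S0_cases by blast

lemma supported_init_private_nbr:
  assumes v: "v \<in> S0 - crit (T x) E S0"
  obtains z where "z \<in> T x" "z \<notin> S0" "z \<notin> M" "E z v" "\<forall>s\<in>M - {v}. \<not> E z s"
proof -
  have vMA: "v \<in> M - A" and vT: "v \<in> T x" and vV: "v \<in> V"
    using supported_init_in_M[OF v] v T_subset by auto
  have not_nbr: "\<not> E w v" if "w = x \<or> w \<in> N" for w
    using that vMA X_nbr_in_A[OF _ x_in] N_M_nbr by blast
  have "v \<in> crit V E M"
    using vMA crit_M by blast
  then obtain z where z: "z \<in> V" "z = v \<or> z \<notin> M \<and> E z v" "\<forall>s\<in>M - {v}. \<not> E z s"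
    by (rule private_nbr[OF dominating_M])
  have "z \<noteq> v"
  proof
    assume "z = v"
    obtain s where s: "s \<in> S0 - {v}" "E v s"
      using supported_init_nbr[OF v] by metis
    then have "s \<in> S0" "E s v"
      using sym[OF vV _ s(2)] T_subset by auto
    then show False
      using z(3) \<open>z = v\<close> s not_nbr by (cases rule: S0_cases) auto
  qed
  then have zM: "z \<notin> M" and zv: "E z v"
    using z(2) by auto
  have "z \<in> T x"
    using T_nbr_closed[OF vT x_V z(1) zv] zM A2_subset_M by blast
  moreover have "z \<notin> S0"
  proof
    assume "z \<in> S0"
    then show False
      using zM not_nbr zv by (cases rule: S0_cases) auto
  qed
  ultimately show ?thesis
    using that zM zv z(3) by blast
qed

lemma supported_init_parent:
  assumes v: "v \<in> S0 - crit (T x) E S0"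
  obtains z where "z \<in> T x" "z \<notin> S0" "E v z" "sub.D z < sub.D v"
proof -
  have vT: "v \<in> T x" and vx: "v \<noteq> x"
    using v supported_init_not_root by auto
  obtain z where zT: "z \<in> T x" and zS0: "z \<notin> S0" and zM: "z \<notin> M" and zv: "E z v"
    and z_priv: "\<forall>s\<in>M - {v}. \<not> E z s"
    using supported_init_private_nbr[OF v] by metis
  have "dominating (T x) E (S0 - {v})"
    using v unfolding crit_def by blast
  then obtain s where s: "s \<in> S0 - {v}" "E z s"
    using zT zS0 unfolding dominating_def by blast
  have sT: "s \<in> T x"
    using s by blast
  have "s \<in> S0"
    using s by blast
  then have "sub.D z < sub.D v"
  proof (cases rule: S0_cases)
    case 1
    then show ?thesis
      using z_priv s by blast
  next
    case 2
    then have "sub.D z = 1"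
      using sub.depth_root_nbr[OF zT] s(2) by simp
    then show ?thesis
      using sub.depth_adjacent[OF vT zT sub.sym[OF zT vT zv]] sub.depth_eq_0_iff[OF vT] vx by auto
  next
    case 3
    obtain a where a: "a \<in> A - A2" "a \<in> T x" "E s a" "sub.D a = 1" "sub.D s = 2"
      using depth_N[OF 3 sT] by metis
    have sz: "E s z"
      using sub.sym[OF zT sT s(2)] .
    have "z \<noteq> a"
      using zM a A_subset_M by blast
    then have "sub.D z \<noteq> 1"
      using sub.parent_unique[OF sT zT sz _ a(2) a(3)] a by auto
    then have dz: "sub.D z = 3"
      using sub.depth_adjacent[OF sT zT sz] a(5) by auto
    have "sub.D v \<noteq> 2"
      using sub.parent_unique[OF zT vT zv _ sT s(2)] dz a(5) s by auto
    then show ?thesis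
      using sub.depth_adjacent[OF vT zT sub.sym[OF zT vT zv]] dz by auto
  qed
  then show ?thesis
    using that zT zS0 sub.sym[OF zT vT zv] by blast
qed

lemma init_invariant: "alg1_invariant (T x) E x S0"
  unfolding alg1_invariant_def
proof (intro conjI ballI allI impI)
  fix v assume v: "v \<in> S0 - crit (T x) E S0"
  then show "v \<noteq> x"
    by (rule supported_init_not_root)
  fix p assume p: "p \<in> T x" "E v p \<and> sub.D p < sub.D v"
  obtain z where "z \<in> T x" "z \<notin> S0" "E v z" "sub.D z < sub.D v"
    using supported_init_parent[OF v] by metis
  moreover have "v \<in> T x"
    using v by blast
  ultimately show "p \<notin> S0"
    using sub.parent_unique[of v p z] p by auto
qed (use init_dominating root_in_S0 in auto)

end

lemma card_le_card_replace:
  assumes "finite S" "finite R" "R \<subseteq> U" "card (S \<inter> U) \<le> card R"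
  shows "card S \<le> card ((S - (S \<inter> U)) \<union> R)"
proof -
  have "card ((S - (S \<inter> U)) \<union> R) = card (S - (S \<inter> U)) + card R"
    using assms(1-3) by (intro card_Un_disjoint) auto
  moreover have "card S = card (S - (S \<inter> U)) + card (S \<inter> U)"
    using assms(1) by (metis Int_lower1 card_Diff_subset card_mono finite_Int le_add_diff_inverse2)
  ultimately show ?thesis
    using assms(4) by simp
qed

context alg2_subtree
begin

lemma loop_update:
  assumes R: "alg1_result (T x) E x (Mc \<inter> T x) R" and Mc: "Mc \<inter> T x = S0" "Mc \<subseteq> V"
  shows "min_dominating (T x) E R" "x \<in> R" "R \<subseteq> T x"
    and "(Mc - (Mc \<inter> T x)) \<union> R \<subseteq> V"
    and "card Mc \<le> card ((Mc - (Mc \<inter> T x)) \<union> R)"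
    and "x' \<in> X \<Longrightarrow> x' \<noteq> x \<Longrightarrow> ((Mc - (Mc \<inter> T x)) \<union> R) \<inter> T x' = Mc \<inter> T x'"
proof -
  have props: "min_dominating (T x) E R" "x \<in> R" "card S0 \<le> card R"
    using sub.alg1_result_props[OF R[unfolded Mc(1)] init_invariant] by auto
  then show "min_dominating (T x) E R" "x \<in> R"
    by auto
  show RT: "R \<subseteq> T x"
    using props(1) by (simp add: min_dominating_def dominating_def)
  then show "(Mc - (Mc \<inter> T x)) \<union> R \<subseteq> V"
    using Mc(2) T_subset by blast
  have "card (Mc \<inter> T x) \<le> card R"
    using props(3) Mc(1) by simp
  then show "card Mc \<le> card ((Mc - (Mc \<inter> T x)) \<union> R)"
    using card_le_card_replace[OF finite_subset[OF Mc(2) finite_V] finite_subset[OF RT sub.finite_W] RT]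
    by blast
  show "((Mc - (Mc \<inter> T x)) \<union> R) \<inter> T x' = Mc \<inter> T x'" if "x' \<in> X" "x' \<noteq> x"
    using T_disjoint[OF x_in that(1)] that(2) RT by blast
qed

end

context alg2_setting
begin

lemma loop_terminates_exists:
  "distinct xs \<Longrightarrow> set xs \<subseteq> X \<Longrightarrow> Mc \<subseteq> V \<Longrightarrow> \<forall>x\<in>set xs. Mc \<inter> T x = M0 \<inter> T x \<Longrightarrow>
   alg2_loop_terminates V E A2 xs Mc \<and> (\<exists>Mf. alg2_loop V E A2 xs Mc Mf)"
proof (induction xs arbitrary: Mc)
  case Nil
  then show ?case
    using alg2_loop.nil[of V E A2 Mc] by auto
next
  case (Cons x xs)
  interpret alg2_subtree V E M X x
    using Cons.prems(2) by unfold_locales simp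
  have S0: "Mc \<inter> T x = S0"
    using Cons.prems(4) by simp
  have next_ok: "alg2_loop_terminates V E A2 xs ((Mc - (Mc \<inter> T x)) \<union> R) \<and>
      (\<exists>Mf. alg2_loop V E A2 xs ((Mc - (Mc \<inter> T x)) \<union> R) Mf)"
    if R: "alg1_result (T x) E x (Mc \<inter> T x) R" for R
  proof (rule Cons.IH)
    note update = loop_update[OF R S0 Cons.prems(3)]
    show "distinct xs" "set xs \<subseteq> X"
      using Cons.prems(1,2) by auto
    show "(Mc - (Mc \<inter> T x)) \<union> R \<subseteq> V"
      by (rule update(4))
    show "\<forall>x'\<in>set xs. ((Mc - (Mc \<inter> T x)) \<union> R) \<inter> T x' = M0 \<inter> T x'"
    proof
      fix x' assume x': "x' \<in> set xs"
      then have "((Mc - (Mc \<inter> T x)) \<union> R) \<inter> T x' = Mc \<inter> T x'"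
        using update(6) Cons.prems(1,2) by auto
      also have "\<dots> = M0 \<inter> T x'"
        using Cons.prems(4) x' by simp
      finally show "((Mc - (Mc \<inter> T x)) \<union> R) \<inter> T x' = M0 \<inter> T x'" .
    qed
  qed
  have "alg1_terminates (T x) E x (Mc \<inter> T x)"
    using sub.alg1_terminates_if_invariant[OF init_invariant] S0 by simp
  then have "alg2_loop_terminates V E A2 (x # xs) Mc"
    using next_ok by simp
  moreover obtain R where R: "alg1_result (T x) E x (Mc \<inter> T x) R"
    using sub.alg1_result_exists[OF init_invariant] S0 by auto
  then obtain Mf where "alg2_loop V E A2 xs ((Mc - (Mc \<inter> T x)) \<union> R) Mf"
    using next_ok by blast
  then have "alg2_loop V E A2 (x # xs) Mc Mf"
    by (rule alg2_loop.cons[OF R])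
  ultimately show ?case
    by blast
qed

lemma loop_result:
  assumes "alg2_loop V E A2 xs Mc Mf"
    and "distinct xs" "set xs \<subseteq> X" "Mc \<subseteq> V" "\<forall>x\<in>set xs. Mc \<inter> T x = M0 \<inter> T x"
  shows "card Mc \<le> card Mf \<and> Mf \<subseteq> V \<and> (\<forall>v. (\<forall>x\<in>set xs. v \<notin> T x) \<longrightarrow> (v \<in> Mf \<longleftrightarrow> v \<in> Mc))
    \<and> (\<forall>x\<in>set xs. min_dominating (T x) E (Mf \<inter> T x) \<and> x \<in> Mf)"
  using assms
proof (induction rule: alg2_loop.induct)
  case (nil Mc)
  then show ?case
    by simp
next
  case (cons x Mc R xs Mf)
  interpret alg2_subtree V E M X x
    using cons.prems(2) by unfold_locales simp
  define Mc' where "Mc' = (Mc - (Mc \<inter> T x)) \<union> R"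
  have S0: "Mc \<inter> T x = S0"
    using cons.prems(4) by simp
  note update = loop_update[OF cons.hyps(1) S0 cons.prems(3), folded Mc'_def]
  have "\<forall>x'\<in>set xs. Mc' \<inter> T x' = M0 \<inter> T x'"
  proof
    fix x' assume x': "x' \<in> set xs"
    then have "Mc' \<inter> T x' = Mc \<inter> T x'"
      using update(6) cons.prems(1,2) by auto
    also have "\<dots> = M0 \<inter> T x'"
      using cons.prems(4) x' by simp
    finally show "Mc' \<inter> T x' = M0 \<inter> T x'" .
  qed
  then have IH: "card Mc' \<le> card Mf" "Mf \<subseteq> V"
    "\<And>v. \<forall>x\<in>set xs. v \<notin> T x \<Longrightarrow> v \<in> Mf \<longleftrightarrow> v \<in> Mc'"
    "\<forall>x\<in>set xs. min_dominating (T x) E (Mf \<inter> T x) \<and> x \<in> Mf"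
    using cons.IH[folded Mc'_def] cons.prems(1,2) update(4) by auto
  have "v \<notin> T x'" if "v \<in> T x" "x' \<in> set xs" for v x'
    using T_disjoint[OF x_in, of x'] cons.prems(1,2) that by auto
  then have "Mf \<inter> T x = R"
    using IH(3) update(3) unfolding Mc'_def by blast
  moreover have "v \<in> Mf \<longleftrightarrow> v \<in> Mc" if "\<forall>x'\<in>set (x # xs). v \<notin> T x'" for v
    using IH(3)[of v] that update(3) unfolding Mc'_def by auto
  ultimately show ?case
    using IH update(1,2,5) by auto
qed

end

section \<open>Gluing the subtrees\<close>

locale alg2_final = alg2_setting +
  fixes Mf :: "'a set"
  assumes Mf_subset: "Mf \<subseteq> V"
    and outside: "\<And>v. \<forall>x\<in>X. v \<notin> T x \<Longrightarrow> v \<in> Mf \<longleftrightarrow> v \<in> M0"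
    and inside: "\<And>x. x \<in> X \<Longrightarrow> min_dominating (T x) E (Mf \<inter> T x) \<and> x \<in> Mf"
begin

lemma Mf_outside: "\<forall>x\<in>X. v \<notin> T x \<Longrightarrow> v \<in> Mf \<longleftrightarrow> v \<in> M \<and> v \<notin> A2"
  using outside init_outside_T by blast

lemma A2_not_in_Mf: "a \<in> A2 \<Longrightarrow> a \<notin> Mf"
  using Mf_outside T_A2_disjoint X_subset by blast

lemma outside_T_nbr:
  assumes "\<forall>x\<in>X. y \<notin> T x" "y \<in> V" "y \<notin> A2" "s \<in> V" "E y s"
  shows "\<forall>x\<in>X. s \<notin> T x"
  using assms T_nbr_closed X_subset by blast

lemma outside_M_nbr_in_Mf:
  assumes yT: "\<forall>x\<in>X. y \<notin> T x" and y: "y \<in> V" "y \<notin> A2" and m: "m \<in> M" "m \<notin> A2" "E y m"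
  shows "m \<in> Mf"
  using Mf_outside outside_T_nbr[OF yT y] m M_subset by blast

lemma outside_dominated:
  assumes yT: "\<forall>x\<in>X. y \<notin> T x" and y: "y \<in> V" "y \<notin> A2" "y \<notin> M"
  shows "\<exists>s\<in>Mf. E y s"
proof -
  obtain m where m: "m \<in> M" "E y m"
    using dominating_M y unfolding dominating_def by blast
  show ?thesis
  proof (cases "m \<in> A2")
    case True
    have mV: "m \<in> V"
      using m M_subset by blast
    have "y \<notin> N1 V E M"
      using True y(1) sym[OF y(1) mV m(2)] unfolding a2_def cnbr_def nbr_def by blast
    then obtain m' where m': "m' \<in> M" "E y m'" "m' \<noteq> m"
      using N1I[of y V M m E] y m mV by blast
    moreover have "y \<notin> X"
      using yT root_in_T by blast
    ultimately have "m' \<notin> A2"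
      using A2_nbr_unique[OF y(1) _ True _ m(2)] y(2) by blast
    then show ?thesis
      using outside_M_nbr_in_Mf[OF yT y(1,2)] m' by blast
  qed (use outside_M_nbr_in_Mf[OF yT y(1,2)] m in blast)
qed

lemma Mf_dominating: "dominating V E Mf"
  unfolding dominating_def
proof (intro conjI ballI Mf_subset)
  fix y assume yV: "y \<in> V"
  show "y \<in> Mf \<or> (\<exists>s\<in>Mf. E y s)"
  proof (cases "\<forall>x\<in>X. y \<notin> T x")
    case False
    then obtain x where "x \<in> X" "y \<in> T x"
      by blast
    moreover from this have "dominating (T x) E (Mf \<inter> T x)"
      using inside by (simp add: min_dominating_def)
    ultimately show ?thesis
      unfolding dominating_def by blast
  next
    case yT: True
    show ?thesis
    proof (cases "y \<in> A2")
      case True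
      then obtain x where "x \<in> X" "E x y"
        using in_nbrs[of y X] by blast
      then show ?thesis
        using inside sym[OF _ yV] X_subset by blast
    next
      case False
      then show ?thesis
        using Mf_outside[OF yT] outside_dominated[OF yT yV] by blast
    qed
  qed
qed

lemma Mf_crit_inside:
  assumes x: "x \<in> X" and v: "v \<in> Mf" "v \<in> T x"
  shows "\<not> dominating V E (Mf - {v})"
proof -
  have "dominating (T x) E (Mf \<inter> T x)" "v \<in> crit (T x) E (Mf \<inter> T x)"
    using inside[OF x] v min_dominating_crit by (auto simp: min_dominating_def)
  then obtain z where z: "z \<in> T x" "z = v \<or> z \<notin> Mf \<inter> T x \<and> E z v"
    "\<forall>s\<in>(Mf \<inter> T x) - {v}. \<not> E z s"
    by (rule private_nbr)
  have zV: "z \<in> V"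
    using z(1) T_subset by blast
  have "\<not> E z s" if "s \<in> Mf - {v}" for s
  proof
    assume "E z s"
    moreover have "s \<in> V" "s \<notin> A2"
      using that Mf_subset A2_not_in_Mf by auto
    ultimately have "s \<in> T x"
      using T_nbr_closed[OF z(1)] x X_subset sym[OF zV] by blast
    then show False
      using z(3) that \<open>E z s\<close> by blast
  qed
  moreover have "z \<notin> Mf - {v}"
    using z by blast
  ultimately show ?thesis
    using zV unfolding dominating_def by blast
qed

lemma Mf_crit_outside:
  assumes v: "v \<in> Mf" "\<forall>x\<in>X. v \<notin> T x"
  shows "\<not> dominating V E (Mf - {v})"
proof -
  have vM: "v \<in> M" "v \<notin> A2"
    using Mf_outside v by auto
  then obtain z where z: "z \<in> V" "z = v \<or> z \<notin> M \<and> E z v" "\<forall>s\<in>M - {v}. \<not> E z s"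
    using private_nbr[OF dominating_M] crit_M by blast
  have zT: "\<forall>x\<in>X. z \<notin> T x"
  proof (cases "z = v")
    case False
    then show ?thesis
      using outside_T_nbr[OF v(2) _ vM(2) z(1)] z(2) sym[OF z(1)] vM M_subset by blast
  qed (use v in simp)
  have "\<not> E z s" if s: "s \<in> Mf - {v}" for s
  proof
    assume zs: "E z s"
    show False
    proof (cases "\<forall>x\<in>X. s \<notin> T x")
      case True
      then show False
        using Mf_outside s z(3) zs by blast
    next
      case False
      then have "z \<in> A2"
        using T_nbr_closed z(1) zs sym s Mf_subset zT X_subset by blast
      then show False
        using z(2) A2_subset_M vM(2) by blast
    qed
  qed
  moreover have "z \<notin> Mf - {v}"
    using Mf_outside[OF zT] z(2) by blast
  ultimately show ?thesis
    using z(1) unfolding dominating_def by blast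
qed

lemma Mf_min_dominating: "min_dominating V E Mf"
  unfolding min_dominating_iff
  using Mf_dominating Mf_crit_inside Mf_crit_outside by blast

end

theorem theorem4p6:
  fixes V :: "'a set" and E :: "'a \<Rightarrow> 'a \<Rightarrow> bool" and M X :: "'a set"
  assumes tree: "is_tree V E"
    and minM: "min_dominating V E M"
    and XN2: "X \<subseteq> N2 V E M"
    and conn: "connected_graph ((nbrs V E X \<inter> a2 V E M) \<union> X) E"
    and indep: "\<forall>u\<in>X. \<forall>v\<in>X. \<not> E u v"
  shows "\<forall>xs. distinct xs \<and> set xs = X \<longrightarrow>
           alg2_loop_terminates V E (nbrs V E X \<inter> a2 V E M) xs (alg2_init V E M X)
         \<and> (\<exists>Mf. alg2_loop V E (nbrs V E X \<inter> a2 V E M) xs (alg2_init V E M X) Mf)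
         \<and> (\<forall>Mf. alg2_loop V E (nbrs V E X \<inter> a2 V E M) xs (alg2_init V E M X) Mf \<longrightarrow>
               min_dominating V E Mf \<and>
               int (card Mf) \<ge> int (card M) - int (card (nbrs V E X \<inter> a2 V E M)) + int (card X))"
proof (intro allI impI conjI)
  fix xs assume xs: "distinct xs \<and> set xs = X"
  interpret alg2_setting V E M X
    using assms by unfold_locales
  have M0: "M0 \<subseteq> V"
    unfolding init_eq using M_subset X_subset N_subset by blast
  show "alg2_loop_terminates V E A2 xs M0" "\<exists>Mf. alg2_loop V E A2 xs M0 Mf"
    using loop_terminates_exists[of xs M0] xs M0 by auto
  fix Mf assume "alg2_loop V E A2 xs M0 Mf"
  then have "card M0 \<le> card Mf" and final: "alg2_final V E M X Mf"
    using loop_result[of xs M0 Mf] xs M0 by (auto simp: alg2_final_def alg2_final_axioms_def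
        alg2_setting_axioms)
  show "min_dominating V E Mf"
    using alg2_final.Mf_min_dominating[OF final] .
  show "int (card M) - int (card A2) + int (card X) \<le> int (card Mf)"
    using card_init \<open>card M0 \<le> card Mf\<close> by linarith
qed

end
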